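(* Consider the algorithm below with parameters $T\in\mathbb{N}$, $C\ge1$, $\varepsilon>0$ and an online estimation oracle satisfying the online estimation assumption. Whenever the cover-computation problem is feasible at every round, the algorithm produces policy covers $p_1,\dots,p_H\in\Delta(\Pi)$ such that with probability at least $1-\delta$, $$\forall h\in[H]:\quad\Psi^{M^\star}_{h,\varepsilon}(p_h)\le 11HC+\frac{12}{\varepsilon}\sqrt{\frac{H^3C\cdot\mathrm{Est}^{\mathrm{on}}_H(\mathcal{M},T,\delta)}{T}}+\frac{8H}{\varepsilon^2}\frac{\mathrm{Est}^{\mathrm{on}}_H(\mathcal{M},T,\delta)}{T}.$$
   Context: Reward-free episodic MDPs over countable $\mathcal{X}$, actions $\mathcal{A}$, horizon $H$; $\Pi\subseteq\Pi_{\mathrm{RNS}}$ a given policy class. For MDP $M$: $d^{M,\pi}_h(x,a)$ layer-$h$ occupancy, $d^{M,p}_h=\mathbb{E}_{\pi\sim p}d^{M,\pi}_h$, $\Psi^M_{h,\varepsilon}(p)=\sup_{\pi\in\Pi}\mathbb{E}^{M,\pi}\big[\frac{d^{M,\pi}_h(x_h,a_h)}{d^{M,p}_h(x_h,a_h)+\varepsilon d^{M,\pi}_h(x_h,a_h)}\big]$. $M(\pi)$: law of trajectory; $D^2_H$: squared Hellinger distance. True MDP $M^\star\in\mathcal{M}$. Online estimation assumption: at each $t$, given $(\pi^{(i)},o^{(i)})_{i<t}$ with $\pi^{(i)}\sim p^{(i)}$, $o^{(i)}\sim M^\star(\pi^{(i)})$, the oracle returns $\widehat M^{(t)}\in\mathcal{M}$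 such that $\sum_{t=1}^T\mathbb{E}_{\pi\sim p^{(t)}}[D^2_H(\widehat M^{(t)}(\pi),M^\star(\pi))]\le\mathrm{Est}^{\mathrm{on}}_H(\mathcal{M},T,\delta)$ with probability $\ge1-\delta$ whenever $M^\star\in\mathcal{M}$. Algorithm: for $t=1,\dots,T$: get $\widehat M^{(t)}$ from the oracle; for each $h$ compute $p^{(t)}_h\in\Delta(\Pi)$ with $\Psi^{\widehat M^{(t)}}_{h,\varepsilon}(p^{(t)}_h)\le C$; let $q^{(t)}=\mathrm{Unif}(p^{(t)}_1,\dots,p^{(t)}_H)$, sample $\pi^{(t)}\sim q^{(t)}$ and observe its trajectory in $M^\star$. Output $p_h=\mathrm{Unif}(p^{(1)}_h,\dots,p^{(T)}_h)$. *)

theory Defs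
  imports "HOL-Probability.Probability"
begin

text \<open>Reward-free episodic MDPs with layers 1..H.  An MDP is given by an initial
  state distribution and layer-dependent transition kernels.\<close>

record ('x, 'a) mdp =
  init :: "'x pmf"
  trans :: "nat \<Rightarrow> 'x \<Rightarrow> 'a \<Rightarrow> 'x pmf"

type_synonym ('x, 'a) policy = "nat \<Rightarrow> 'x \<Rightarrow> 'a pmf"

fun gen :: "('x, 'a) mdp \<Rightarrow> ('x, 'a) policy \<Rightarrow> nat \<Rightarrow> 'x \<Rightarrow> nat \<Rightarrow> ('x \<times> 'a) list pmf" where
  "gen M \<pi> h x 0 = return_pmf []"
| "gen M \<pi> h x (Suc n) =
     bind_pmf (\<pi> h x) (\<lambda>a. bind_pmf (trans M h x a) (\<lambda>x'.
       map_pmf (\<lambda>rest. (x, a) # rest) (gen M \<pi> (Suc h) x' n)))"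

text \<open>Law M(pi) of the trajectory (x_1,a_1),...,(x_H,a_H); entry h-1 of the list is layer h.\<close>
definition traj :: "('x, 'a) mdp \<Rightarrow> ('x, 'a) policy \<Rightarrow> nat \<Rightarrow> ('x \<times> 'a) list pmf" where
  "traj M \<pi> H = bind_pmf (init M) (\<lambda>x. gen M \<pi> 1 x H)"

definition occ :: "('x, 'a) mdp \<Rightarrow> ('x, 'a) policy \<Rightarrow> nat \<Rightarrow> nat \<Rightarrow> 'x \<times> 'a \<Rightarrow> real" where
  "occ M \<pi> H h z = measure_pmf.prob (traj M \<pi> H) {\<tau>. \<tau> ! (h - 1) = z}"

definition occ_mix :: "('x, 'a) mdp \<Rightarrow> ('x, 'a) policy pmf \<Rightarrow> nat \<Rightarrow> nat \<Rightarrow> 'x \<times> 'a \<Rightarrow> real" where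
  "occ_mix M p H h z = measure_pmf.expectation p (\<lambda>\<pi>. occ M \<pi> H h z)"

text \<open>Psi^M_{h,eps}(p); the supremum over Pi of nonnegative quantities (convention: sup of the
  empty family is 0).\<close>
definition Psi :: "('x, 'a) mdp \<Rightarrow> ('x, 'a) policy set \<Rightarrow> nat \<Rightarrow> nat \<Rightarrow> real \<Rightarrow> ('x, 'a) policy pmf \<Rightarrow> real" where
  "Psi M Pol H h \<epsilon> p = Sup (insert 0 ((\<lambda>\<pi>. measure_pmf.expectation (traj M \<pi> H)
      (\<lambda>\<tau>. occ M \<pi> H h (\<tau> ! (h - 1)) /
            (occ_mix M p H h (\<tau> ! (h - 1)) + \<epsilon> * occ M \<pi> H h (\<tau> ! (h - 1))))) ` Pol))"

text \<open>Squared Hellinger distance (without the factor 1/2) between discrete laws.\<close>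
definition hell2 :: "'b pmf \<Rightarrow> 'b pmf \<Rightarrow> real" where
  "hell2 P Q = infsum (\<lambda>\<omega>. (sqrt (pmf P \<omega>) - sqrt (pmf Q \<omega>))^2) UNIV"

text \<open>Histories: chronological list of (policy played, observed trajectory).\<close>
type_synonym ('x, 'a) hist = "(('x, 'a) policy \<times> ('x \<times> 'a) list) list"

fun run :: "(('x, 'a) hist \<Rightarrow> ('x, 'a) policy pmf) \<Rightarrow> ('x, 'a) mdp \<Rightarrow> nat \<Rightarrow> nat \<Rightarrow> ('x, 'a) hist pmf" where
  "run lrn Ms H 0 = return_pmf []"
| "run lrn Ms H (Suc t) =
     bind_pmf (run lrn Ms H t) (\<lambda>hs. bind_pmf (lrn hs) (\<lambda>\<pi>.
       map_pmf (\<lambda>ob. hs @ [(\<pi>, ob)]) (traj Ms \<pi> H)))"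

definition est_err :: "(('x, 'a) hist \<Rightarrow> ('x, 'a) mdp) \<Rightarrow> (('x, 'a) hist \<Rightarrow> ('x, 'a) policy pmf)
    \<Rightarrow> ('x, 'a) mdp \<Rightarrow> nat \<Rightarrow> nat \<Rightarrow> ('x, 'a) hist \<Rightarrow> real" where
  "est_err orc lrn Ms H T hs = (\<Sum>t<T. measure_pmf.expectation (lrn (take t hs))
      (\<lambda>\<pi>. hell2 (traj (orc (take t hs)) \<pi> H) (traj Ms \<pi> H)))"

text \<open>The algorithm's round distribution q^(t) = Unif(p^(t)_1,...,p^(t)_H), where
  p^(t)_h = cover hs h is computed from the history (via the estimate).\<close>
definition alg_lrn :: "(('x, 'a) hist \<Rightarrow> nat \<Rightarrow> ('x, 'a) policy pmf) \<Rightarrow> nat \<Rightarrow> ('x, 'a) hist \<Rightarrow> ('x, 'a) policy pmf" where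
  "alg_lrn cover H hs = bind_pmf (pmf_of_set {1..H}) (\<lambda>h. cover hs h)"

definition alg_out :: "(('x, 'a) hist \<Rightarrow> nat \<Rightarrow> ('x, 'a) policy pmf) \<Rightarrow> nat \<Rightarrow> ('x, 'a) hist \<Rightarrow> nat \<Rightarrow> ('x, 'a) policy pmf" where
  "alg_out cover T hs h = bind_pmf (pmf_of_set {0..<T}) (\<lambda>t. cover (take t hs) h)"

end

theory Submission
  imports Defs
begin

(*
  Fix a round t and a layer h; let M' be the estimated model, p_l the covers and q their
  uniform mixture over the layers. Feasibility bounds the coverage ratio of p_h for M'. To
  transfer it to the true model M, replace the denominator d^{M',p_h}_h by d^{M,p_h}_h, at the
  price of a Hellinger term, and the numerator d^{M',pi}_h by d^{M,pi}_h, at the price of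
  1/eps times their total variation. By the simulation lemma this total variation is at most
  the sum over the earlier layers l of the expected transition error of M' under d^{M',pi}_l.
  As p_l covers d^{M',pi}_l, AM-GM bounds each summand by 2 sqrt (C e_l) + 2 eps C, where e_l
  is the squared Hellinger distance between the transition kernels averaged over d^{M',p_l}_l;
  the chain rule for the Hellinger distance bounds e_l by 4 H times the Hellinger error of
  round t, the factor H because q picks layer l with probability 1/H. The coverage ratio is
  convex in the cover, so the ratio of the output is at most the average of the per-round
  bounds, and concavity of the square root turns the sum of the round errors into Est.
*)

no_notation Infinite_Sum.abs_summable_on (infixr \<open>abs'_summable'_on\<close> 46)

section \<open>Expectations and sums over pmfs\<close>

abbreviation expect :: "'b pmf \<Rightarrow> ('b \<Rightarrow> real) \<Rightarrow> real" where
  "expect P f \<equiv> measure_pmf.expectation P f"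

lemma integrable_pmf_bounded:
  fixes f :: "'b \<Rightarrow> real"
  assumes "\<And>x. \<bar>f x\<bar> \<le> B"
  shows "integrable (measure_pmf P) f"
  using assms by (intro measure_pmf.integrable_const_bound[where B=B]) auto

lemma expect_le_bound:
  fixes f :: "'b \<Rightarrow> real"
  assumes "\<And>x. 0 \<le> f x" "\<And>x. f x \<le> B"
  shows "expect P f \<le> B"
  using assms by (intro measure_pmf.integral_le_const integrable_pmf_bounded[where B=B]) auto

lemma expect_bind_pmf:
  fixes f :: "'c \<Rightarrow> real"
  assumes "\<And>y. \<bar>f y\<bar> \<le> B"
  shows "expect (bind_pmf M N) f = expect M (\<lambda>x. expect (N x) f)"
  unfolding measure_pmf_bind
  by (rule integral_bind[where K="count_space UNIV" and B=B and B'=1])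
     (auto simp: assms space_subprob_algebra measure_pmf.subprob_space_axioms)

lemma expect_le_card_mul_uniform:
  fixes f :: "'b \<Rightarrow> real"
  assumes I: "finite I" "i \<in> I" and f: "\<And>y. 0 \<le> f y" "\<And>y. f y \<le> B"
  shows "expect (p i) f \<le> card I * expect (bind_pmf (pmf_of_set I) p) f"
proof -
  have ne: "I \<noteq> {}" using I by auto
  then have "expect (bind_pmf (pmf_of_set I) p) f = (\<Sum>j\<in>I. expect (p j) f) / card I"
    using I f by (subst expect_bind_pmf[where B=B]) (auto simp: integral_pmf_of_set abs_le_iff)
  moreover have "expect (p i) f \<le> (\<Sum>j\<in>I. expect (p j) f)"
    using I f by (intro member_le_sum) (auto intro: integral_nonneg_AE)
  ultimately show ?thesis using I ne by (simp add: card_gt_0_iff field_simps)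
qed

lemma abs_summable_on_pmf_dominated:
  fixes f :: "'b \<Rightarrow> real"
  assumes "\<And>x. \<bar>f x\<bar> \<le> c * (pmf P x + pmf Q x)"
  shows "f abs_summable_on UNIV"
proof (rule abs_summable_on_comparison_test')
  show "(\<lambda>x. c * (pmf P x + pmf Q x)) abs_summable_on UNIV"
    by (intro abs_summable_on_cmult_right abs_summable_on_add) auto
qed (use assms in auto)

lemma abs_summable_on_pmf_times_bounded:
  fixes f :: "'b \<Rightarrow> real"
  assumes "\<And>x. \<bar>f x\<bar> \<le> B"
  shows "(\<lambda>x. pmf P x * f x) abs_summable_on UNIV"
proof (rule abs_summable_on_pmf_dominated[where c=B and Q=P])
  fix x
  have "pmf P x * \<bar>f x\<bar> \<le> pmf P x * B" by (rule mult_left_mono) (use assms in auto)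
  moreover have "0 \<le> pmf P x * B" using order_trans[OF abs_ge_zero assms] by simp
  ultimately show "\<bar>pmf P x * f x\<bar> \<le> B * (pmf P x + pmf P x)"
    by (simp add: abs_mult algebra_simps)
qed

lemma infsetsum_linear2:
  fixes f g :: "'a \<Rightarrow> real"
  assumes "f abs_summable_on A" "g abs_summable_on A"
  shows "infsetsum (\<lambda>x. a * f x + b * g x) A = a * infsetsum f A + b * infsetsum g A"
  using assms by (simp add: infsetsum_add abs_summable_on_cmult_right infsetsum_cmult_right)

lemma infsetsum_linear3:
  fixes f g h :: "'a \<Rightarrow> real"
  assumes "f abs_summable_on A" "g abs_summable_on A" "h abs_summable_on A"
  shows "infsetsum (\<lambda>x. a * f x + b * g x + c * h x) A
       = a * infsetsum f A + b * infsetsum g A + c * infsetsum h A"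
proof -
  have s: "(\<lambda>x. a * f x) abs_summable_on A" "(\<lambda>x. b * g x) abs_summable_on A"
      "(\<lambda>x. c * h x) abs_summable_on A"
    using assms by (auto intro: abs_summable_on_cmult_right)
  show ?thesis
    using infsetsum_add[OF abs_summable_on_add[OF s(1,2)] s(3)] infsetsum_add[OF s(1,2)] assms
    by (simp add: infsetsum_cmult_right)
qed

section \<open>Hellinger distance\<close>

lemma sqrt_diff_square_add:
  fixes p q :: real
  assumes "0 \<le> p" "0 \<le> q"
  shows "(sqrt p - sqrt q)\<^sup>2 + 2 * sqrt (p * q) = p + q"
  using assms by (simp add: power2_eq_square real_sqrt_mult algebra_simps)

lemma abs_summable_hellinger:
  "(\<lambda>\<omega>. (sqrt (pmf P \<omega>) - sqrt (pmf Q \<omega>))\<^sup>2) abs_summable_on UNIV"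
proof (rule abs_summable_on_pmf_dominated[where c=1 and P=P and Q=Q])
  fix \<omega>
  have "0 \<le> sqrt (pmf P \<omega> * pmf Q \<omega>)" by simp
  then have "(sqrt (pmf P \<omega>) - sqrt (pmf Q \<omega>))\<^sup>2 \<le> pmf P \<omega> + pmf Q \<omega>"
    using sqrt_diff_square_add[OF pmf_nonneg pmf_nonneg, of P \<omega> Q \<omega>] by linarith
  then show "\<bar>(sqrt (pmf P \<omega>) - sqrt (pmf Q \<omega>))\<^sup>2\<bar> \<le> 1 * (pmf P \<omega> + pmf Q \<omega>)" by simp
qed

lemma abs_summable_bhattacharyya:
  "(\<lambda>\<omega>. sqrt (pmf P \<omega> * pmf Q \<omega>)) abs_summable_on UNIV"
proof (rule abs_summable_on_pmf_dominated[where c=1 and P=P and Q=Q])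
  fix \<omega>
  have "0 \<le> (sqrt (pmf P \<omega>) - sqrt (pmf Q \<omega>))\<^sup>2" "0 \<le> sqrt (pmf P \<omega> * pmf Q \<omega>)" by simp_all
  then have "sqrt (pmf P \<omega> * pmf Q \<omega>) \<le> pmf P \<omega> + pmf Q \<omega>"
    using sqrt_diff_square_add[OF pmf_nonneg pmf_nonneg, of P \<omega> Q \<omega>] by linarith
  then show "\<bar>sqrt (pmf P \<omega> * pmf Q \<omega>)\<bar> \<le> 1 * (pmf P \<omega> + pmf Q \<omega>)" by simp
qed

definition bhattacharyya :: "'b pmf \<Rightarrow> 'b pmf \<Rightarrow> real" where
  "bhattacharyya P Q = infsetsum (\<lambda>\<omega>. sqrt (pmf P \<omega> * pmf Q \<omega>)) UNIV"

lemma hell2_eq_infsetsum: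
  "hell2 P Q = infsetsum (\<lambda>\<omega>. (sqrt (pmf P \<omega>) - sqrt (pmf Q \<omega>))\<^sup>2) UNIV"
  unfolding hell2_def by (rule infsetsum_infsum[OF abs_summable_hellinger, symmetric])

lemma hell2_eq_bhattacharyya: "hell2 P Q = 2 - 2 * bhattacharyya P Q"
proof -
  have "hell2 P Q + 2 * bhattacharyya P Q
      = infsetsum (\<lambda>\<omega>. (sqrt (pmf P \<omega>) - sqrt (pmf Q \<omega>))\<^sup>2 + 2 * sqrt (pmf P \<omega> * pmf Q \<omega>)) UNIV"
    unfolding hell2_eq_infsetsum bhattacharyya_def
    by (simp add: infsetsum_add infsetsum_cmult_right abs_summable_on_cmult_right
        abs_summable_hellinger abs_summable_bhattacharyya)
  also have "\<dots> = infsetsum (\<lambda>\<omega>. pmf P \<omega> + pmf Q \<omega>) UNIV"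
    by (simp add: sqrt_diff_square_add)
  also have "\<dots> = 2" by (simp add: infsetsum_add pmf_abs_summable infsetsum_pmf_eq_1)
  finally show ?thesis by simp
qed

lemma hell2_nonneg: "0 \<le> hell2 P Q"
  unfolding hell2_eq_infsetsum by (rule infsetsum_nonneg) simp

lemma bhattacharyya_nonneg: "0 \<le> bhattacharyya P Q"
  unfolding bhattacharyya_def by (rule infsetsum_nonneg) simp

lemma bhattacharyya_le_1: "bhattacharyya P Q \<le> 1"
  using hell2_nonneg[of P Q] by (simp add: hell2_eq_bhattacharyya)

lemma hell2_le_2: "hell2 P Q \<le> 2"
  using bhattacharyya_nonneg[of P Q] by (simp add: hell2_eq_bhattacharyya)

lemma abs_hell2_le_2: "\<bar>hell2 P Q\<bar> \<le> 2"
  by (simp add: hell2_nonneg hell2_le_2)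

lemma bhattacharyya_commute: "bhattacharyya P Q = bhattacharyya Q P"
  unfolding bhattacharyya_def by (simp add: mult.commute)

lemma hell2_commute: "hell2 P Q = hell2 Q P"
  unfolding hell2_eq_bhattacharyya by (simp add: bhattacharyya_commute)

lemma sqrt_ratio_mult:
  fixes a b :: real
  assumes "0 \<le> a" "0 \<le> b"
  shows "a * sqrt (b / a) = sqrt (a * b)"
proof (cases "a = 0")
  case False
  then have "a * b = a\<^sup>2 * (b / a)" by (simp add: power2_eq_square)
  then have "sqrt (a * b) = sqrt (a\<^sup>2) * sqrt (b / a)" by (metis real_sqrt_mult)
  then show ?thesis using assms by simp
qed simp

lemma ennreal_bhattacharyya:
  "ennreal (bhattacharyya P Q) = (\<integral>\<^sup>+\<omega>. ennreal (sqrt (pmf P \<omega> * pmf Q \<omega>)) \<partial>count_space UNIV)"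
  unfolding bhattacharyya_def
  by (rule nn_integral_conv_infsetsum[OF abs_summable_bhattacharyya, symmetric]) simp

lemma ennreal_bhattacharyya_ratio:
  "ennreal (bhattacharyya P Q) = (\<integral>\<^sup>+\<omega>. ennreal (sqrt (pmf Q \<omega> / pmf P \<omega>)) \<partial>measure_pmf P)"
  unfolding ennreal_bhattacharyya nn_integral_measure_pmf
  by (intro nn_integral_cong) (simp add: sqrt_ratio_mult flip: ennreal_mult)

(* Weighting AM-GM by the likelihoods of a coarser pair of distributions turns both sides
  into ratio integrals of that pair; this gives the data-processing inequalities below. *)
lemma sqrt_mult_le_weighted:
  fixes p q a b :: real
  assumes "0 \<le> p" "0 \<le> q" "0 \<le> a" "0 \<le> b" "a = 0 \<Longrightarrow> p = 0" "b = 0 \<Longrightarrow> q = 0"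
  shows "2 * sqrt (p * q) \<le> p * sqrt (b / a) + q * sqrt (a / b)"
proof (cases "a = 0 \<or> b = 0")
  case True
  then show ?thesis using assms by auto
next
  case False
  then have ab: "0 < a" "0 < b" using assms by auto
  define l where "l = sqrt (b / a)"
  have l: "0 < l" "sqrt (a / b) = 1 / l" using ab by (simp_all add: l_def real_sqrt_divide)
  have "0 \<le> (sqrt (p * l) - sqrt (q / l))\<^sup>2" by simp
  also have "\<dots> = p * l + q / l - 2 * sqrt (p * q)"
    using l assms by (simp add: power2_eq_square algebra_simps flip: real_sqrt_mult)
  finally show ?thesis by (simp add: l l_def)
qed

lemma bhattacharyya_le_weighted:
  fixes a b :: "'b \<Rightarrow> real"
  assumes "\<And>\<omega>. 0 \<le> a \<omega>" "\<And>\<omega>. 0 \<le> b \<omega>"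
    and "\<And>\<omega>. a \<omega> = 0 \<Longrightarrow> pmf P \<omega> = 0" "\<And>\<omega>. b \<omega> = 0 \<Longrightarrow> pmf Q \<omega> = 0"
  shows "2 * ennreal (bhattacharyya P Q) \<le> (\<integral>\<^sup>+\<omega>. ennreal (sqrt (b \<omega> / a \<omega>)) \<partial>measure_pmf P)
                                          + (\<integral>\<^sup>+\<omega>. ennreal (sqrt (a \<omega> / b \<omega>)) \<partial>measure_pmf Q)"
proof -
  have "2 * ennreal (bhattacharyya P Q)
      = (\<integral>\<^sup>+\<omega>. ennreal (2 * sqrt (pmf P \<omega> * pmf Q \<omega>)) \<partial>count_space UNIV)"
    by (simp add: ennreal_bhattacharyya ennreal_mult nn_integral_cmult)
  also have "\<dots> \<le> (\<integral>\<^sup>+\<omega>. ennreal (pmf P \<omega> * sqrt (b \<omega> / a \<omega>) + pmf Q \<omega> * sqrt (a \<omega> / b \<omega>))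
                    \<partial>count_space UNIV)"
    by (intro nn_integral_mono ennreal_leI sqrt_mult_le_weighted) (simp_all add: assms)
  also have "\<dots> = (\<integral>\<^sup>+\<omega>. ennreal (sqrt (b \<omega> / a \<omega>)) \<partial>measure_pmf P)
                + (\<integral>\<^sup>+\<omega>. ennreal (sqrt (a \<omega> / b \<omega>)) \<partial>measure_pmf Q)"
    using assms by (simp add: nn_integral_measure_pmf ennreal_mult nn_integral_add)
  finally show ?thesis .
qed

lemma bhattacharyya_map_pmf_ge:
  "bhattacharyya P Q \<le> bhattacharyya (map_pmf f P) (map_pmf f Q)"
proof -
  let ?P = "map_pmf f P" and ?Q = "map_pmf f Q"
  have pos: "pmf R \<omega> = 0" if "pmf (map_pmf f R) (f \<omega>) = 0" for R \<omega>
    using that by (auto simp: pmf_eq_0_set_pmf)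
  have "2 * ennreal (bhattacharyya P Q)
      \<le> (\<integral>\<^sup>+\<omega>. ennreal (sqrt (pmf ?Q (f \<omega>) / pmf ?P (f \<omega>))) \<partial>measure_pmf P)
        + (\<integral>\<^sup>+\<omega>. ennreal (sqrt (pmf ?P (f \<omega>) / pmf ?Q (f \<omega>))) \<partial>measure_pmf Q)"
    by (rule bhattacharyya_le_weighted) (auto intro: pos)
  also have "\<dots> = ennreal (bhattacharyya ?P ?Q) + ennreal (bhattacharyya ?Q ?P)"
    by (simp add: ennreal_bhattacharyya_ratio)
  also have "\<dots> = 2 * ennreal (bhattacharyya ?P ?Q)"
    by (simp add: bhattacharyya_commute[of ?Q] mult_2)
  finally show ?thesis by (simp add: ennreal_mult_le_mult_iff bhattacharyya_nonneg)
qed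

lemma expect_bhattacharyya_le_bind_pmf:
  "expect p (\<lambda>\<pi>. bhattacharyya (F \<pi>) (G \<pi>)) \<le> bhattacharyya (bind_pmf p F) (bind_pmf p G)"
proof -
  let ?F = "bind_pmf p F" and ?G = "bind_pmf p G"
  have "ennreal (expect p (\<lambda>\<pi>. bhattacharyya (F \<pi>) (G \<pi>)))
      = (\<integral>\<^sup>+\<pi>. ennreal (bhattacharyya (F \<pi>) (G \<pi>)) \<partial>measure_pmf p)"
    by (rule nn_integral_eq_integral[symmetric])
       (auto intro: integrable_pmf_bounded[where B=1] simp: bhattacharyya_nonneg bhattacharyya_le_1)
  then have "2 * ennreal (expect p (\<lambda>\<pi>. bhattacharyya (F \<pi>) (G \<pi>)))
      = (\<integral>\<^sup>+\<pi>. 2 * ennreal (bhattacharyya (F \<pi>) (G \<pi>)) \<partial>measure_pmf p)"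
    by (simp add: nn_integral_cmult)
  also have "\<dots> \<le> (\<integral>\<^sup>+\<pi>. (\<integral>\<^sup>+\<omega>. ennreal (sqrt (pmf ?G \<omega> / pmf ?F \<omega>)) \<partial>measure_pmf (F \<pi>))
                     + (\<integral>\<^sup>+\<omega>. ennreal (sqrt (pmf ?F \<omega> / pmf ?G \<omega>)) \<partial>measure_pmf (G \<pi>)) \<partial>measure_pmf p)"
    by (intro nn_integral_mono_AE)
       (auto simp: AE_measure_pmf_iff pmf_eq_0_set_pmf intro!: bhattacharyya_le_weighted)
  also have "\<dots> = ennreal (bhattacharyya ?F ?G) + ennreal (bhattacharyya ?G ?F)"
    by (simp add: nn_integral_add ennreal_bhattacharyya_ratio)
  also have "\<dots> = 2 * ennreal (bhattacharyya ?F ?G)"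
    by (simp add: bhattacharyya_commute[of ?G] mult_2)
  finally show ?thesis by (simp add: ennreal_mult_le_mult_iff bhattacharyya_nonneg)
qed

lemma hell2_map_pmf_le: "hell2 (map_pmf f P) (map_pmf f Q) \<le> hell2 P Q"
  using bhattacharyya_map_pmf_ge[of P Q f] by (simp add: hell2_eq_bhattacharyya)

lemma expect_hell2_eq_bhattacharyya:
  "expect p (\<lambda>\<pi>. hell2 (F \<pi>) (G \<pi>)) = 2 - 2 * expect p (\<lambda>\<pi>. bhattacharyya (F \<pi>) (G \<pi>))"
  unfolding hell2_eq_bhattacharyya
  using integrable_pmf_bounded[of "\<lambda>\<pi>. bhattacharyya (F \<pi>) (G \<pi>)" 1 p]
  by (simp add: bhattacharyya_nonneg bhattacharyya_le_1)

lemma hell2_bind_pmf_le: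
  "hell2 (bind_pmf p F) (bind_pmf p G) \<le> expect p (\<lambda>\<pi>. hell2 (F \<pi>) (G \<pi>))"
  unfolding expect_hell2_eq_bhattacharyya
  using expect_bhattacharyya_le_bind_pmf[of p F G] by (simp add: hell2_eq_bhattacharyya)

lemma expect_hell2_mono:
  assumes "\<And>\<pi>. hell2 (F \<pi>) (G \<pi>) \<le> hell2 (F' \<pi>) (G' \<pi>)"
  shows "expect p (\<lambda>\<pi>. hell2 (F \<pi>) (G \<pi>)) \<le> expect p (\<lambda>\<pi>. hell2 (F' \<pi>) (G' \<pi>))"
  by (intro integral_mono integrable_pmf_bounded[where B=2] abs_hell2_le_2 assms)

definition joint_pmf :: "'a pmf \<Rightarrow> ('a \<Rightarrow> 'b pmf) \<Rightarrow> ('a \<times> 'b) pmf" where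
  "joint_pmf \<mu> K = bind_pmf \<mu> (\<lambda>z. map_pmf (Pair z) (K z))"

lemma pmf_joint_pmf: "pmf (joint_pmf \<mu> K) (z, w) = pmf \<mu> z * pmf (K z) w"
proof -
  have "pmf (joint_pmf \<mu> K) (z, w) = expect \<mu> (\<lambda>z'. indicator {z} z' * pmf (K z) w)"
    unfolding joint_pmf_def pmf_bind
  proof (rule Bochner_Integration.integral_cong)
    fix z'
    show "pmf (map_pmf (Pair z') (K z')) (z, w) = indicator {z} z' * pmf (K z) w"
    proof (cases "z' = z")
      case True
      then show ?thesis using pmf_map_inj'[of "Pair z" "K z" w] by (simp add: inj_on_def)
    qed (auto intro!: pmf_map_outside)
  qed simp
  then show ?thesis by (simp add: measure_pmf_single)
qed

lemma map_snd_joint_pmf: "map_pmf snd (joint_pmf \<mu> K) = bind_pmf \<mu> K"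
  by (simp add: joint_pmf_def map_bind_pmf map_pmf_comp)

lemma map_joint_pmf: "map_pmf (apsnd f) (joint_pmf \<mu> K) = joint_pmf \<mu> (\<lambda>z. map_pmf f (K z))"
  by (simp add: joint_pmf_def map_bind_pmf map_pmf_comp)

lemma joint_pmf_bind_pmf: "joint_pmf (bind_pmf M N) K = bind_pmf M (\<lambda>x. joint_pmf (N x) K)"
  by (simp add: joint_pmf_def bind_assoc_pmf)

lemma bhattacharyya_joint_pmf:
  "bhattacharyya (joint_pmf \<mu> K) (joint_pmf \<nu> L)
     = infsetsum (\<lambda>z. sqrt (pmf \<mu> z * pmf \<nu> z) * bhattacharyya (K z) (L z)) UNIV"
proof -
  have summable: "(\<lambda>z. sqrt (pmf \<mu> z * pmf \<nu> z) * bhattacharyya (K z) (L z)) abs_summable_on UNIV"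
    by (rule abs_summable_on_comparison_test'[OF abs_summable_bhattacharyya[of \<mu> \<nu>]])
       (simp add: abs_mult mult_left_le bhattacharyya_nonneg bhattacharyya_le_1)
  let ?J1 = "joint_pmf \<mu> K" and ?J2 = "joint_pmf \<nu> L"
  have "ennreal (bhattacharyya ?J1 ?J2)
      = (\<integral>\<^sup>+z. \<integral>\<^sup>+w. ennreal (sqrt (pmf ?J2 (z, w) / pmf ?J1 (z, w))) \<partial>measure_pmf (K z) \<partial>measure_pmf \<mu>)"
    unfolding ennreal_bhattacharyya_ratio[of ?J1] by (simp add: joint_pmf_def[of \<mu> K])
  also have "\<dots> = (\<integral>\<^sup>+z. \<integral>\<^sup>+w. ennreal (sqrt (pmf \<nu> z / pmf \<mu> z)) * ennreal (sqrt (pmf (L z) w / pmf (K z) w))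
           \<partial>measure_pmf (K z) \<partial>measure_pmf \<mu>)"
  proof (intro nn_integral_cong)
    fix z w
    have "pmf ?J2 (z, w) / pmf ?J1 (z, w) = (pmf \<nu> z / pmf \<mu> z) * (pmf (L z) w / pmf (K z) w)"
      by (simp add: pmf_joint_pmf)
    then show "ennreal (sqrt (pmf ?J2 (z, w) / pmf ?J1 (z, w)))
        = ennreal (sqrt (pmf \<nu> z / pmf \<mu> z)) * ennreal (sqrt (pmf (L z) w / pmf (K z) w))"
      by (simp only: real_sqrt_mult) (simp add: ennreal_mult)
  qed
  also have "\<dots> = (\<integral>\<^sup>+z. ennreal (sqrt (pmf \<nu> z / pmf \<mu> z)) * ennreal (bhattacharyya (K z) (L z))
                    \<partial>measure_pmf \<mu>)"
    by (simp add: nn_integral_cmult ennreal_bhattacharyya_ratio)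
  also have "\<dots> = (\<integral>\<^sup>+z. ennreal (pmf \<mu> z * sqrt (pmf \<nu> z / pmf \<mu> z) * bhattacharyya (K z) (L z))
                    \<partial>count_space UNIV)"
    by (simp add: nn_integral_measure_pmf bhattacharyya_nonneg ennreal_mult mult.assoc)
  also have "\<dots> = ennreal (infsetsum (\<lambda>z. sqrt (pmf \<mu> z * pmf \<nu> z) * bhattacharyya (K z) (L z)) UNIV)"
    by (simp add: sqrt_ratio_mult nn_integral_conv_infsetsum[OF summable] bhattacharyya_nonneg)
  finally show ?thesis
    by (simp add: bhattacharyya_nonneg infsetsum_nonneg)
qed

lemma expect_hell2_le_joint_pmf:
  "expect \<mu> (\<lambda>z. hell2 (K z) (L z)) \<le> 2 * hell2 (joint_pmf \<mu> K) (joint_pmf \<nu> L) + 2 * hell2 \<mu> \<nu>"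
proof -
  define b where "b z = bhattacharyya (K z) (L z)" for z
  define r where "r z = sqrt (pmf \<mu> z * pmf \<nu> z)" for z
  have b: "0 \<le> b z" "b z \<le> 1" for z by (simp_all add: b_def bhattacharyya_nonneg bhattacharyya_le_1)
  have pointwise: "pmf \<mu> z + 2 * (r z * b z) + 2 * r z \<le> 2 * pmf \<mu> z + 2 * pmf \<nu> z + pmf \<mu> z * b z"
    for z
  proof -
    define s t where "s = sqrt (pmf \<mu> z)" and "t = sqrt (pmf \<nu> z)"
    have "r z = s * t" by (simp add: r_def s_def t_def real_sqrt_mult)
    then have "2 * pmf \<mu> z + 2 * pmf \<nu> z + pmf \<mu> z * b z - (pmf \<mu> z + 2 * (r z * b z) + 2 * r z)
        = (1 + b z) * (s - t)\<^sup>2 + (1 - b z) * t\<^sup>2"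
      by (simp add: s_def t_def power2_eq_square algebra_simps)
    moreover have "0 \<le> (1 + b z) * (s - t)\<^sup>2 + (1 - b z) * t\<^sup>2" using b[of z] by simp
    ultimately show ?thesis by linarith
  qed
  have summable: "r abs_summable_on UNIV" "(\<lambda>z. r z * b z) abs_summable_on UNIV"
      "(\<lambda>z. pmf \<mu> z * b z) abs_summable_on UNIV"
    using abs_summable_bhattacharyya[of \<mu> \<nu>] b
    by (auto simp: r_def abs_mult mult_left_le intro: abs_summable_on_comparison_test'
        abs_summable_on_pmf_times_bounded[where B=1])
  have "1 + 2 * bhattacharyya (joint_pmf \<mu> K) (joint_pmf \<nu> L) + 2 * bhattacharyya \<mu> \<nu>
      = infsetsum (\<lambda>z. pmf \<mu> z + 2 * (r z * b z) + 2 * r z) UNIV"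
    unfolding bhattacharyya_joint_pmf using summable
    by (simp add: bhattacharyya_def[of \<mu> \<nu>] infsetsum_add infsetsum_cmult_right
        abs_summable_on_add abs_summable_on_cmult_right pmf_abs_summable infsetsum_pmf_eq_1 b_def r_def)
  also have "\<dots> \<le> infsetsum (\<lambda>z. 2 * pmf \<mu> z + 2 * pmf \<nu> z + pmf \<mu> z * b z) UNIV"
    using summable pointwise
    by (intro infsetsum_mono) (auto intro!: abs_summable_on_add abs_summable_on_cmult_right pmf_abs_summable)
  also have "\<dots> = 4 + expect \<mu> b"
    using summable
    by (simp add: infsetsum_add infsetsum_cmult_right abs_summable_on_add abs_summable_on_cmult_right
        pmf_abs_summable infsetsum_pmf_eq_1 pmf_expectation_eq_infsetsum)
  finally show ?thesis
    unfolding expect_hell2_eq_bhattacharyya by (simp add: hell2_eq_bhattacharyya b_def[abs_def])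
qed

(* (v - 1/2) (p - q) <= |sqrt p - sqrt q| (sqrt p + sqrt q) / 2, followed by AM-GM with weight l. *)
lemma mult_diff_le_hellinger_terms:
  fixes p q v l :: real
  assumes p: "0 \<le> p" and q: "0 \<le> q" and v: "0 \<le> v" "v \<le> 1" and l: "0 < l"
  shows "p * v - q * v \<le> 1 / 2 * (p - q) + l / 4 * (sqrt p - sqrt q)\<^sup>2 + 1 / (4 * l) * (p + q + 2 * sqrt (p * q))"
proof -
  define d s where "d = sqrt p - sqrt q" and "s = sqrt p + sqrt q"
  have s: "0 \<le> s" "s\<^sup>2 = p + q + 2 * sqrt (p * q)"
    using p q by (simp_all add: s_def power2_eq_square real_sqrt_mult algebra_simps)
  have diff: "p - q = d * s" using p q by (simp add: d_def s_def power2_eq_square algebra_simps)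
  have "(v - 1 / 2) * (d * s) \<le> \<bar>v - 1 / 2\<bar> * (\<bar>d\<bar> * s)"
    using s by (metis abs_ge_self abs_mult abs_of_nonneg)
  also have "\<dots> \<le> 1 / 2 * (\<bar>d\<bar> * s)"
  proof -
    have "\<bar>v - 1 / 2\<bar> \<le> 1 / 2" unfolding abs_le_iff using v by linarith
    then show ?thesis using s by (intro mult_right_mono) auto
  qed
  also have "\<dots> \<le> l / 4 * d\<^sup>2 + 1 / (4 * l) * s\<^sup>2"
  proof -
    have "0 \<le> (l * \<bar>d\<bar> - s)\<^sup>2 / (4 * l)" using l by simp
    also have "\<dots> = l / 4 * d\<^sup>2 + 1 / (4 * l) * s\<^sup>2 - 1 / 2 * (\<bar>d\<bar> * s)"
      using l by (simp add: field_simps power2_eq_square)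
    finally show ?thesis by simp
  qed
  finally have "(v - 1 / 2) * (d * s) \<le> l / 4 * d\<^sup>2 + 1 / (4 * l) * s\<^sup>2" .
  moreover have "p * v - q * v = (v - 1 / 2) * (d * s) + 1 / 2 * (p - q)"
    unfolding diff[symmetric] by (simp add: field_simps)
  ultimately show ?thesis unfolding s(2)[symmetric] d_def by linarith
qed

lemma expect_le_hell2_param:
  fixes V :: "'b \<Rightarrow> real"
  assumes V: "\<And>\<omega>. 0 \<le> V \<omega>" "\<And>\<omega>. V \<omega> \<le> 1" and l: "0 < l"
  shows "expect P V \<le> expect Q V + l / 4 * hell2 P Q + 1 / l"
proof -
  define d where "d \<omega> = (sqrt (pmf P \<omega>) - sqrt (pmf Q \<omega>))\<^sup>2" for \<omega>
  define r where "r \<omega> = sqrt (pmf P \<omega> * pmf Q \<omega>)" for \<omega>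
  have summable: "(\<lambda>\<omega>. pmf R \<omega> * V \<omega>) abs_summable_on UNIV" for R
    by (rule abs_summable_on_pmf_times_bounded[where B=1]) (use V in auto)
  have d_summable: "d abs_summable_on UNIV" and r_summable: "r abs_summable_on UNIV"
    unfolding d_def r_def by (fact abs_summable_hellinger abs_summable_bhattacharyya)+
  have "expect P V - expect Q V = infsetsum (\<lambda>\<omega>. pmf P \<omega> * V \<omega> - pmf Q \<omega> * V \<omega>) UNIV"
    by (simp add: pmf_expectation_eq_infsetsum infsetsum_diff summable)
  also have "\<dots> \<le> infsetsum (\<lambda>\<omega>. 1 / 2 * (pmf P \<omega> - pmf Q \<omega>) + l / 4 * d \<omega>
                    + 1 / (4 * l) * (pmf P \<omega> + pmf Q \<omega> + 2 * r \<omega>)) UNIV"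
    using d_summable r_summable V l unfolding d_def r_def
    by (intro infsetsum_mono mult_diff_le_hellinger_terms abs_summable_on_add abs_summable_on_diff
        abs_summable_on_cmult_right pmf_abs_summable summable pmf_nonneg)
  also have "\<dots> = 1 / 2 * infsetsum (\<lambda>\<omega>. pmf P \<omega> - pmf Q \<omega>) UNIV + l / 4 * infsetsum d UNIV
                + 1 / (4 * l) * infsetsum (\<lambda>\<omega>. pmf P \<omega> + pmf Q \<omega> + 2 * r \<omega>) UNIV"
    using d_summable r_summable
    by (intro infsetsum_linear3 abs_summable_on_add abs_summable_on_diff abs_summable_on_cmult_right
        pmf_abs_summable)
  also have "\<dots> = l / 4 * hell2 P Q + (2 + 2 * bhattacharyya P Q) / (4 * l)"
    using r_summable
    by (subst infsetsum_add)
       (auto simp: hell2_eq_infsetsum bhattacharyya_def d_def r_def infsetsum_add infsetsum_diff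
        infsetsum_cmult_right infsetsum_pmf_eq_1 pmf_abs_summable)
  also have "\<dots> \<le> l / 4 * hell2 P Q + 1 / l"
    using l bhattacharyya_le_1[of P Q] by (simp add: field_simps)
  finally show ?thesis by simp
qed

lemma expect_le_sqrt_hell2:
  fixes V :: "'b \<Rightarrow> real"
  assumes V: "\<And>\<omega>. 0 \<le> V \<omega>" "\<And>\<omega>. V \<omega> \<le> 1"
  shows "expect P V \<le> expect Q V + sqrt (hell2 P Q)"
proof (cases "hell2 P Q = 0")
  case True
  show ?thesis
  proof (rule field_le_epsilon)
    fix e :: real assume "0 < e"
    then show "expect P V \<le> expect Q V + sqrt (hell2 P Q) + e"
      using expect_le_hell2_param[OF V, where l="1 / e" and P=P and Q=Q] True by simp
  qed
next
  case False
  define s where "s = sqrt (hell2 P Q)"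
  have s: "0 < s" "hell2 P Q = s\<^sup>2" using False hell2_nonneg[of P Q] by (simp_all add: s_def)
  have "expect P V \<le> expect Q V + (2 / s) / 4 * hell2 P Q + 1 / (2 / s)"
    by (rule expect_le_hell2_param[OF V]) (use s in simp)
  also have "expect Q V + (2 / s) / 4 * hell2 P Q + 1 / (2 / s) = expect Q V + s"
    using s by (simp add: field_simps power2_eq_square)
  finally show ?thesis by (simp add: s_def)
qed

lemma expect_bind_pmf_le_hell2:
  fixes g :: "'c \<Rightarrow> real"
  assumes g: "\<And>y. 0 \<le> g y" "\<And>y. g y \<le> 1"
  shows "expect (bind_pmf P K) g \<le> expect (bind_pmf Q K) g + min 1 (sqrt (hell2 P Q))"
proof -
  define V where "V x = expect (K x) g" for x
  have V: "0 \<le> V x" "V x \<le> 1" for x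
    using g by (simp_all add: V_def integral_nonneg_AE expect_le_bound)
  have bind: "expect (bind_pmf R K) g = expect R V" for R
    unfolding V_def by (rule expect_bind_pmf[where B=1]) (use g in \<open>simp add: abs_le_iff\<close>)
  have "expect P V \<le> expect Q V + sqrt (hell2 P Q)" by (rule expect_le_sqrt_hell2[OF V])
  moreover have "expect P V \<le> expect Q V + 1"
    using V expect_le_bound[of V 1 P] by (simp add: integral_nonneg_AE add_increasing)
  ultimately show ?thesis by (simp add: bind)
qed

section \<open>Coverage ratio\<close>

(* cov_ratio d^{M,pi}_h d^{M,p}_h eps is the quantity inside the supremum defining Psi,
  see Psi_eq_cov_ratio below. *)
definition cov_ratio :: "'z pmf \<Rightarrow> 'z pmf \<Rightarrow> real \<Rightarrow> real" where
  "cov_ratio A B \<epsilon> = expect A (\<lambda>z. pmf A z / (pmf B z + \<epsilon> * pmf A z))"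

lemma ratio_le_inverse:
  fixes a b \<epsilon> :: real
  assumes "0 \<le> a" "0 \<le> b" "0 < \<epsilon>"
  shows "a / (b + \<epsilon> * a) \<le> 1 / \<epsilon>"
proof (cases "a = 0")
  case False
  then have "0 < b + \<epsilon> * a" using assms by (simp add: add_nonneg_pos)
  then show ?thesis using assms by (simp add: field_simps)
qed (use assms in simp)

lemma abs_ratio_le_inverse:
  fixes a b \<epsilon> :: real
  assumes "0 \<le> a" "0 \<le> b" "0 < \<epsilon>"
  shows "\<bar>a / (b + \<epsilon> * a)\<bar> \<le> 1 / \<epsilon>"
  using ratio_le_inverse[OF assms] assms by simp

lemma cov_ratio_le_inverse: "0 < \<epsilon> \<Longrightarrow> cov_ratio A B \<epsilon> \<le> 1 / \<epsilon>"
  unfolding cov_ratio_def by (intro expect_le_bound ratio_le_inverse) simp_all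

lemma mult_le_cover_terms:
  fixes a b t l \<epsilon> :: real
  assumes a: "0 \<le> a" and b: "0 \<le> b" and t: "0 \<le> t" "t \<le> 1" and l: "0 < l" and \<epsilon>: "0 < \<epsilon>"
  shows "a * t \<le> l / 2 * (a * (a / (b + \<epsilon> * a))) + 1 / (2 * l) * (b * t\<^sup>2) + \<epsilon> / (2 * l) * (a * t)"
proof (cases "a = 0")
  case False
  define u where "u = b + \<epsilon> * a"
  have u: "0 < u" using a b False \<epsilon> by (simp add: u_def add_nonneg_pos)
  have "l / 2 * (a * (a / u)) + 1 / (2 * l) * (u * t\<^sup>2) - a * t = (l * a - u * t)\<^sup>2 / (2 * l * u)"
    using u l by (simp add: field_simps power2_eq_square)
  moreover have "0 \<le> (l * a - u * t)\<^sup>2 / (2 * l * u)" using u l by simp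
  moreover have "\<epsilon> * (a * t\<^sup>2) \<le> \<epsilon> * (a * t)"
    using a t \<epsilon> by (intro mult_left_mono) (simp_all add: power2_eq_square mult_left_le_one_le)
  then have "1 / (2 * l) * (u * t\<^sup>2) \<le> 1 / (2 * l) * (b * t\<^sup>2 + \<epsilon> * (a * t))"
    using l by (intro mult_left_mono) (simp_all add: u_def algebra_simps)
  moreover have "1 / (2 * l) * (b * t\<^sup>2 + \<epsilon> * (a * t)) = 1 / (2 * l) * (b * t\<^sup>2) + \<epsilon> / (2 * l) * (a * t)"
    by (simp add: distrib_left)
  ultimately show ?thesis unfolding u_def by linarith
qed (use b t l in simp)

lemma expect_le_cov_ratio_param:
  fixes s :: "'z \<Rightarrow> real"
  assumes s: "\<And>z. 0 \<le> s z" "\<And>z. s z \<le> 1" and l: "0 < l" and \<epsilon>: "0 < \<epsilon>"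
  shows "expect A s \<le> l / 2 * cov_ratio A B \<epsilon> + 1 / (2 * l) * expect B (\<lambda>z. (s z)\<^sup>2)
                       + \<epsilon> / (2 * l) * expect A s"
proof -
  let ?r = "\<lambda>z. pmf A z / (pmf B z + \<epsilon> * pmf A z)"
  have summable: "(\<lambda>z. pmf A z * ?r z) abs_summable_on UNIV" "(\<lambda>z. pmf B z * (s z)\<^sup>2) abs_summable_on UNIV"
      "(\<lambda>z. pmf A z * s z) abs_summable_on UNIV"
  proof -
    show "(\<lambda>z. pmf A z * ?r z) abs_summable_on UNIV"
      by (intro abs_summable_on_pmf_times_bounded[where B="1 / \<epsilon>"] abs_ratio_le_inverse pmf_nonneg \<epsilon>)
    show "(\<lambda>z. pmf B z * (s z)\<^sup>2) abs_summable_on UNIV" "(\<lambda>z. pmf A z * s z) abs_summable_on UNIV"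
      by (rule abs_summable_on_pmf_times_bounded[where B=1]; simp add: s power_le_one)+
  qed
  have "infsetsum (\<lambda>z. pmf A z * s z) UNIV
      \<le> infsetsum (\<lambda>z. l / 2 * (pmf A z * ?r z) + 1 / (2 * l) * (pmf B z * (s z)\<^sup>2)
                         + \<epsilon> / (2 * l) * (pmf A z * s z)) UNIV"
    using summable s l \<epsilon>
    by (intro infsetsum_mono mult_le_cover_terms abs_summable_on_add abs_summable_on_cmult_right) auto
  also have "\<dots> = l / 2 * infsetsum (\<lambda>z. pmf A z * ?r z) UNIV
                + 1 / (2 * l) * infsetsum (\<lambda>z. pmf B z * (s z)\<^sup>2) UNIV
                + \<epsilon> / (2 * l) * infsetsum (\<lambda>z. pmf A z * s z) UNIV"
    by (rule infsetsum_linear3[OF summable])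
  finally show ?thesis by (simp only: cov_ratio_def pmf_expectation_eq_infsetsum)
qed

lemma expect_le_cov_ratio:
  fixes s :: "'z \<Rightarrow> real"
  assumes s: "\<And>z. 0 \<le> s z" "\<And>z. s z \<le> 1" and \<epsilon>: "0 < \<epsilon>" and C: "0 < C"
    and cov: "cov_ratio A B \<epsilon> \<le> C"
  shows "expect A s \<le> 2 * sqrt (C * expect B (\<lambda>z. (s z)\<^sup>2)) + 2 * \<epsilon> * C"
proof -
  define X Y where "X = expect A s" and "Y = expect B (\<lambda>z. (s z)\<^sup>2)"
  have X: "0 \<le> X" and Y: "0 \<le> Y" using s by (simp_all add: X_def Y_def integral_nonneg_AE)
  have param: "X \<le> l / 2 * C + 1 / (2 * l) * Y + \<epsilon> / (2 * l) * X" if l: "0 < l" for l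
  proof -
    have "l / 2 * cov_ratio A B \<epsilon> \<le> l / 2 * C" using cov l by simp
    then show ?thesis
      using expect_le_cov_ratio_param[where s=s and A=A and B=B, OF s l \<epsilon>]
      unfolding X_def Y_def by linarith
  qed
  show ?thesis
  proof (cases "\<epsilon> * C \<le> sqrt (C * Y)")
    case True
    define r where "r = sqrt (C * Y)"
    have "0 < r" unfolding r_def using True \<epsilon> C by (meson mult_pos_pos order_less_le_trans)
    then have r: "0 < r" "r * r = C * Y" using C Y by (simp_all add: r_def)
    have "X \<le> r / C / 2 * C + 1 / (2 * (r / C)) * Y + \<epsilon> / (2 * (r / C)) * X"
      by (rule param) (use r C in simp)
    also have "r / C / 2 * C + 1 / (2 * (r / C)) * Y = r"
      using r C by (simp add: field_simps)
    also have "\<epsilon> / (2 * (r / C)) * X \<le> 1 / 2 * X"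
      using True C r X by (intro mult_right_mono) (simp_all add: r_def[symmetric] field_simps)
    finally have "X \<le> 2 * r" by simp
    moreover have "0 \<le> 2 * \<epsilon> * C" using \<epsilon> C by simp
    ultimately show ?thesis unfolding r_def X_def Y_def by linarith
  next
    case False
    then have "(sqrt (C * Y))\<^sup>2 < (\<epsilon> * C)\<^sup>2" using C Y by (intro power_strict_mono) auto
    then have "C * Y < (\<epsilon> * C)\<^sup>2" using C Y by simp
    then have "1 / (2 * \<epsilon>) * Y \<le> \<epsilon> / 2 * C"
      using C \<epsilon> by (simp add: field_simps power2_eq_square)
    then have "X \<le> 2 * \<epsilon> * C" using param[OF \<epsilon>] \<epsilon> by simp
    moreover have "0 \<le> 2 * sqrt (C * Y)" using C Y by simp
    ultimately show ?thesis unfolding X_def Y_def by linarith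
  qed
qed

(* x * (x / (b + eps * x)) is increasing in x and (1/eps)-Lipschitz. *)
lemma ratio_square_diff:
  fixes x y b \<epsilon> :: real
  assumes x: "0 \<le> x" and y: "0 \<le> y" and b: "0 \<le> b" and \<epsilon>: "0 < \<epsilon>"
  obtains c where "0 \<le> c" "c \<le> 1"
    "x * (x / (b + \<epsilon> * x)) - y * (y / (b + \<epsilon> * y)) = c * (x - y) / \<epsilon>"
proof (cases "b = 0")
  case True
  have "v * (v / (\<epsilon> * v)) = v / \<epsilon>" for v using \<epsilon> by (cases "v = 0") simp_all
  then show ?thesis using that[of 1] True by (simp add: diff_divide_distrib)
next
  case False
  define ux uy where "ux = b + \<epsilon> * x" and "uy = b + \<epsilon> * y"
  define N where "N = b * (x + y) + \<epsilon> * x * y"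
  have pos: "0 < ux" "0 < uy" using x y b \<epsilon> False by (simp_all add: ux_def uy_def add_pos_nonneg)
  have "x * (x / ux) - y * (y / uy) = (x - y) * (N / (ux * uy))"
    using pos by (simp add: N_def ux_def uy_def field_simps power2_eq_square)
  then have eq: "x * (x / ux) - y * (y / uy) = \<epsilon> * N / (ux * uy) * (x - y) / \<epsilon>" using \<epsilon> by simp
  have c0: "0 \<le> \<epsilon> * N / (ux * uy)" using x y b \<epsilon> pos by (simp add: N_def)
  have "ux * uy - \<epsilon> * N = b\<^sup>2" by (simp add: N_def ux_def uy_def power2_eq_square algebra_simps)
  then have "\<epsilon> * N \<le> ux * uy" using zero_le_power2[of b] by linarith
  then have c1: "\<epsilon> * N / (ux * uy) \<le> 1" using pos by (simp add: pos_divide_le_eq)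
  show ?thesis by (rule that[OF c0 c1]) (use eq in \<open>simp only: ux_def uy_def\<close>)
qed

lemma ratio_square_le_shift:
  fixes x y b \<epsilon> :: real
  assumes "0 \<le> x" "0 \<le> y" "0 \<le> b" and \<epsilon>: "0 < \<epsilon>"
  shows "x * (x / (b + \<epsilon> * x)) \<le> y * (y / (b + \<epsilon> * y)) + (if y < x then (x - y) / \<epsilon> else 0)"
proof -
  obtain c where c: "0 \<le> c" "c \<le> 1"
    and eq: "x * (x / (b + \<epsilon> * x)) - y * (y / (b + \<epsilon> * y)) = c * (x - y) / \<epsilon>"
    by (rule ratio_square_diff[OF assms])
  have "c * (x - y) / \<epsilon> \<le> (if y < x then (x - y) / \<epsilon> else 0)"
  proof (cases "y < x")
    case True
    then have "c * (x - y) \<le> x - y" using c by (intro mult_left_le_one_le) simp_all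
    then show ?thesis using True \<epsilon> by (simp add: divide_right_mono)
  next
    case False
    then have "c * (x - y) \<le> 0" using c by (intro mult_nonneg_nonpos) simp_all
    then show ?thesis using False \<epsilon> by (simp add: divide_nonpos_pos)
  qed
  then show ?thesis using eq by linarith
qed

lemma cov_ratio_le_numerator_change:
  fixes A A' B :: "'z pmf"
  assumes \<epsilon>: "0 < \<epsilon>"
  defines "S \<equiv> {z. pmf A' z < pmf A z}"
  shows "cov_ratio A B \<epsilon> \<le> cov_ratio A' B \<epsilon> + (measure_pmf.prob A S - measure_pmf.prob A' S) / \<epsilon>"
proof -
  define r where "r Q z = pmf Q z / (pmf B z + \<epsilon> * pmf Q z)" for Q z
  have pointwise: "1 * (pmf A z * r A z) + 1 / \<epsilon> * (pmf A' z * indicator S z)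
      \<le> 1 * (pmf A' z * r A' z) + 1 / \<epsilon> * (pmf A z * indicator S z)" for z
    using ratio_square_le_shift[where x="pmf A z" and y="pmf A' z" and b="pmf B z", OF _ _ _ \<epsilon>]
    by (cases "pmf A' z < pmf A z") (auto simp: r_def S_def diff_divide_distrib)
  have summable: "(\<lambda>z. pmf Q z * r Q z) abs_summable_on UNIV"
      "(\<lambda>z. pmf R z * indicator S z) abs_summable_on UNIV" for Q R
  proof -
    show "(\<lambda>z. pmf Q z * r Q z) abs_summable_on UNIV" unfolding r_def
      by (intro abs_summable_on_pmf_times_bounded[where B="1 / \<epsilon>"] abs_ratio_le_inverse pmf_nonneg \<epsilon>)
    show "(\<lambda>z. pmf R z * indicator S z) abs_summable_on UNIV"
      by (rule abs_summable_on_pmf_times_bounded[where B=1]) simp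
  qed
  have "infsetsum (\<lambda>z. 1 * (pmf A z * r A z) + 1 / \<epsilon> * (pmf A' z * indicator S z)) UNIV
      \<le> infsetsum (\<lambda>z. 1 * (pmf A' z * r A' z) + 1 / \<epsilon> * (pmf A z * indicator S z)) UNIV"
    by (intro infsetsum_mono abs_summable_on_add abs_summable_on_cmult_right summable pointwise)
  then show ?thesis
    by (simp only: infsetsum_linear2 summable flip: pmf_expectation_eq_infsetsum)
       (simp add: cov_ratio_def r_def diff_divide_distrib)
qed

lemma ratio_square_le_denominator_change:
  fixes a b c \<epsilon> :: real
  assumes a: "0 \<le> a" and b: "0 \<le> b" and c: "0 \<le> c" and \<epsilon>: "0 < \<epsilon>"
  shows "a * (a / (b + \<epsilon> * a)) \<le> 2 * (a * (a / (c + \<epsilon> * a))) + 2 / \<epsilon>\<^sup>2 * (sqrt c - sqrt b)\<^sup>2"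
proof (cases "a = 0")
  case False
  define u v d where "u = b + \<epsilon> * a" and "v = c + \<epsilon> * a" and "d = (sqrt c - sqrt b)\<^sup>2"
  have ea: "0 < \<epsilon> * a" using a False \<epsilon> by simp
  have uv: "\<epsilon> * a \<le> u" "\<epsilon> * a \<le> v" using b c by (simp_all add: u_def v_def)
  have "c \<le> 2 * b + 2 * d"
  proof -
    have "0 \<le> (sqrt c - 2 * sqrt b)\<^sup>2" by simp
    moreover have "(sqrt c - 2 * sqrt b)\<^sup>2 = c - 4 * (sqrt c * sqrt b) + 4 * b"
      using b c by (simp add: power2_eq_square algebra_simps)
    moreover have "d = c - 2 * (sqrt c * sqrt b) + b"
      using b c by (simp add: d_def power2_eq_square algebra_simps)
    ultimately show ?thesis by linarith
  qed
  then have vu: "v - 2 * u \<le> 2 * d" using ea by (simp add: u_def v_def)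
  have W: "0 \<le> a\<^sup>2 / (u * v)" "a\<^sup>2 / (u * v) \<le> 1 / \<epsilon>\<^sup>2"
  proof -
    have "(\<epsilon> * a) * (\<epsilon> * a) \<le> u * v" using uv ea by (intro mult_mono) auto
    then show "a\<^sup>2 / (u * v) \<le> 1 / \<epsilon>\<^sup>2" using uv ea \<epsilon> by (simp add: field_simps power2_eq_square)
  qed (use uv ea in simp)
  have "a * (a / u) - 2 * (a * (a / v)) = a\<^sup>2 / (u * v) * (v - 2 * u)"
    using uv ea by (simp add: field_simps power2_eq_square)
  also have "\<dots> \<le> a\<^sup>2 / (u * v) * (2 * d)" by (rule mult_left_mono[OF vu W(1)])
  also have "\<dots> \<le> 1 / \<epsilon>\<^sup>2 * (2 * d)" by (rule mult_right_mono[OF W(2)]) (simp add: d_def)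
  finally have "a * (a / u) - 2 * (a * (a / v)) \<le> 1 / \<epsilon>\<^sup>2 * (2 * d)" .
  then show ?thesis by (simp add: u_def v_def d_def)
qed simp

lemma cov_ratio_le_denominator_change:
  assumes \<epsilon>: "0 < \<epsilon>"
  shows "cov_ratio A B \<epsilon> \<le> 2 * cov_ratio A B' \<epsilon> + 2 / \<epsilon>\<^sup>2 * hell2 B' B"
proof -
  define r where "r Q z = pmf A z / (pmf Q z + \<epsilon> * pmf A z)" for Q z
  have summable: "(\<lambda>z. pmf A z * r Q z) abs_summable_on UNIV" for Q
    unfolding r_def
    by (intro abs_summable_on_pmf_times_bounded[where B="1 / \<epsilon>"] abs_ratio_le_inverse pmf_nonneg \<epsilon>)
  have "infsetsum (\<lambda>z. pmf A z * r B z) UNIV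
      \<le> infsetsum (\<lambda>z. 2 * (pmf A z * r B' z) + 2 / \<epsilon>\<^sup>2 * (sqrt (pmf B' z) - sqrt (pmf B z))\<^sup>2) UNIV"
    unfolding r_def
    by (intro infsetsum_mono ratio_square_le_denominator_change pmf_nonneg \<epsilon> abs_summable_on_add
        abs_summable_on_cmult_right summable[unfolded r_def] abs_summable_hellinger)
  then show ?thesis
    by (simp only: infsetsum_linear2 summable abs_summable_hellinger
        flip: pmf_expectation_eq_infsetsum hell2_eq_infsetsum) (simp add: cov_ratio_def r_def)
qed

lemma inverse_mean_le_mean_inverse:
  fixes a \<epsilon> :: real and b :: "'i \<Rightarrow> real"
  assumes I: "finite I" "I \<noteq> {}" and a: "0 \<le> a" and b: "\<And>t. t \<in> I \<Longrightarrow> 0 \<le> b t" and \<epsilon>: "0 < \<epsilon>"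
  shows "a / ((\<Sum>t\<in>I. b t) / card I + \<epsilon> * a) \<le> (\<Sum>t\<in>I. a / (b t + \<epsilon> * a)) / card I"
proof (cases "a = 0")
  case False
  define y where "y t = b t + \<epsilon> * a" for t
  define m where "m = (\<Sum>t\<in>I. b t) / card I + \<epsilon> * a"
  have n: "0 < real (card I)" using I by (simp add: card_gt_0_iff)
  have y: "0 < y t" if "t \<in> I" for t using b[OF that] \<epsilon> a False by (simp add: y_def add_nonneg_pos)
  have m: "0 < m" using \<epsilon> a False b n by (simp add: m_def add_nonneg_pos sum_nonneg)
  have sum_y: "(\<Sum>t\<in>I. y t) = card I * m" using n by (simp add: y_def m_def sum.distrib field_simps)
  (* tangent line of the convex function 1 / y at the mean m *)
  have tangent: "2 / m - y t / m\<^sup>2 \<le> 1 / y t" if "t \<in> I" for t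
  proof -
    have "0 \<le> (y t - m)\<^sup>2 / (y t * m\<^sup>2)" using y[OF that] m by simp
    also have "\<dots> = y t / m\<^sup>2 - 2 / m + 1 / y t" using y[OF that] m by (simp add: field_simps power2_eq_square)
    finally show ?thesis by simp
  qed
  have "card I / m = (\<Sum>t\<in>I. 2 / m - y t / m\<^sup>2)"
    using m n by (simp add: sum_subtractf sum_divide_distrib[symmetric] sum_y field_simps power2_eq_square)
  also have "\<dots> \<le> (\<Sum>t\<in>I. 1 / y t)" by (rule sum_mono) (rule tangent)
  finally have "a * (card I / m) \<le> a * (\<Sum>t\<in>I. 1 / y t)" using a by (rule mult_left_mono)
  then have "a / m \<le> (\<Sum>t\<in>I. a / y t) / card I" using n by (simp add: sum_distrib_left field_simps)
  then show ?thesis by (simp add: m_def y_def)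
qed simp

lemma cov_ratio_uniform_mix_le:
  assumes I: "finite I" "I \<noteq> {}" and \<epsilon>: "0 < \<epsilon>"
  shows "cov_ratio A (bind_pmf (pmf_of_set I) P) \<epsilon> \<le> (\<Sum>t\<in>I. cov_ratio A (P t) \<epsilon>) / card I"
proof -
  define r where "r t z = pmf A z / (pmf (P t) z + \<epsilon> * pmf A z)" for t z
  have r: "\<bar>r t z\<bar> \<le> 1 / \<epsilon>" for t z
    unfolding r_def by (rule abs_ratio_le_inverse[OF pmf_nonneg pmf_nonneg \<epsilon>])
  have "cov_ratio A (bind_pmf (pmf_of_set I) P) \<epsilon>
      = expect A (\<lambda>z. pmf A z / ((\<Sum>t\<in>I. pmf (P t) z) / card I + \<epsilon> * pmf A z))"
    unfolding cov_ratio_def using I by (simp add: pmf_bind_pmf_of_set)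
  also have "\<dots> \<le> expect A (\<lambda>z. (\<Sum>t\<in>I. r t z) / card I)"
  proof (rule integral_mono)
    show "integrable A (\<lambda>z. pmf A z / ((\<Sum>t\<in>I. pmf (P t) z) / card I + \<epsilon> * pmf A z))"
      by (intro integrable_pmf_bounded[where B="1 / \<epsilon>"] abs_ratio_le_inverse pmf_nonneg \<epsilon>
          divide_nonneg_nonneg sum_nonneg) simp
    show "integrable A (\<lambda>z. (\<Sum>t\<in>I. r t z) / card I)"
      using r by (intro integrable_divide Bochner_Integration.integrable_sum integrable_pmf_bounded)
    show "pmf A z / ((\<Sum>t\<in>I. pmf (P t) z) / card I + \<epsilon> * pmf A z) \<le> (\<Sum>t\<in>I. r t z) / card I" for z
      unfolding r_def by (rule inverse_mean_le_mean_inverse[OF I pmf_nonneg pmf_nonneg \<epsilon>])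
  qed
  also have "\<dots> = expect A (\<lambda>z. \<Sum>t\<in>I. r t z) / card I" by simp
  also have "expect A (\<lambda>z. \<Sum>t\<in>I. r t z) = (\<Sum>t\<in>I. expect A (r t))"
    by (rule Bochner_Integration.integral_sum) (rule integrable_pmf_bounded[OF r])
  finally show ?thesis by (simp add: cov_ratio_def r_def[abs_def])
qed

section \<open>Occupancy measures\<close>

definition step_pmf :: "('x, 'a) mdp \<Rightarrow> ('x, 'a) policy \<Rightarrow> nat \<Rightarrow> 'x \<times> 'a \<Rightarrow> ('x \<times> 'a) pmf" where
  "step_pmf M \<pi> h z = bind_pmf (trans M h (fst z) (snd z)) (\<lambda>x'. map_pmf (Pair x') (\<pi> (Suc h) x'))"

lemma map_fst_step_pmf: "map_pmf fst (step_pmf M \<pi> h z) = trans M h (fst z) (snd z)"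
  by (simp add: step_pmf_def map_bind_pmf map_pmf_comp bind_return_pmf')

lemma map_nth_0_gen: "map_pmf (\<lambda>\<tau>. \<tau> ! 0) (gen M \<pi> h x (Suc n)) = map_pmf (Pair x) (\<pi> h x)"
  by (simp add: map_bind_pmf map_pmf_comp map_pmf_def[of "Pair x"])

lemma map_nth_pair_gen:
  "Suc k < n \<Longrightarrow> map_pmf (\<lambda>\<tau>. (\<tau> ! k, \<tau> ! Suc k)) (gen M \<pi> h x n)
     = joint_pmf (map_pmf (\<lambda>\<tau>. \<tau> ! k) (gen M \<pi> h x n)) (step_pmf M \<pi> (h + k))"
proof (induction k arbitrary: h x n)
  case 0
  then obtain m where n: "n = Suc (Suc m)" by (cases n; cases "n - 1") auto
  show ?case
    unfolding n by (simp add: joint_pmf_def step_pmf_def map_pmf_def bind_assoc_pmf bind_return_pmf)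
next
  case (Suc k)
  then obtain m where n: "n = Suc m" and k: "Suc k < m" by (cases n) auto
  show ?case
    unfolding n by (simp add: map_bind_pmf map_pmf_comp Suc.IH[OF k] joint_pmf_def bind_assoc_pmf)
qed

definition occ_pmf :: "('x, 'a) mdp \<Rightarrow> ('x, 'a) policy \<Rightarrow> nat \<Rightarrow> nat \<Rightarrow> ('x \<times> 'a) pmf" where
  "occ_pmf M \<pi> H h = map_pmf (\<lambda>\<tau>. \<tau> ! (h - 1)) (traj M \<pi> H)"

definition occ_mix_pmf :: "('x, 'a) mdp \<Rightarrow> ('x, 'a) policy pmf \<Rightarrow> nat \<Rightarrow> nat \<Rightarrow> ('x \<times> 'a) pmf" where
  "occ_mix_pmf M p H h = bind_pmf p (\<lambda>\<pi>. occ_pmf M \<pi> H h)"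

lemma occ_eq_pmf: "occ M \<pi> H h z = pmf (occ_pmf M \<pi> H h) z"
  unfolding occ_def occ_pmf_def pmf_map by (simp add: vimage_def)

lemma occ_mix_eq_pmf: "occ_mix M p H h z = pmf (occ_mix_pmf M p H h) z"
  unfolding occ_mix_def occ_mix_pmf_def pmf_bind by (simp add: occ_eq_pmf)

lemma occ_pmf_1: "0 < H \<Longrightarrow> occ_pmf M \<pi> H 1 = bind_pmf (init M) (\<lambda>x. map_pmf (Pair x) (\<pi> 1 x))"
  by (cases H) (simp_all add: occ_pmf_def traj_def map_bind_pmf map_nth_0_gen del: gen.simps)

lemma joint_occ_pmf_step:
  assumes "1 \<le> h" "h < H"
  shows "map_pmf (\<lambda>\<tau>. (\<tau> ! (h - 1), \<tau> ! h)) (traj M \<pi> H) = joint_pmf (occ_pmf M \<pi> H h) (step_pmf M \<pi> h)"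
proof -
  have "map_pmf (\<lambda>\<tau>. (\<tau> ! (h - 1), \<tau> ! Suc (h - 1))) (gen M \<pi> 1 x H)
      = joint_pmf (map_pmf (\<lambda>\<tau>. \<tau> ! (h - 1)) (gen M \<pi> 1 x H)) (step_pmf M \<pi> (1 + (h - 1)))" for x
    by (rule map_nth_pair_gen) (use assms in simp)
  then show ?thesis
    using assms by (simp add: occ_pmf_def traj_def map_bind_pmf joint_pmf_bind_pmf del: gen.simps)
qed

lemma occ_pmf_Suc:
  assumes "1 \<le> h" "h < H"
  shows "occ_pmf M \<pi> H (Suc h) = bind_pmf (occ_pmf M \<pi> H h) (step_pmf M \<pi> h)"
  using arg_cong[OF joint_occ_pmf_step[OF assms], of "map_pmf snd"]
  by (simp add: map_snd_joint_pmf map_pmf_comp occ_pmf_def)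

lemma joint_occ_pmf_trans:
  assumes "1 \<le> h" "h < H"
  shows "map_pmf (\<lambda>\<tau>. (\<tau> ! (h - 1), fst (\<tau> ! h))) (traj M \<pi> H)
       = joint_pmf (occ_pmf M \<pi> H h) (\<lambda>z. trans M h (fst z) (snd z))"
  using arg_cong[OF joint_occ_pmf_step[OF assms], of "map_pmf (apsnd fst)"]
  by (simp add: map_joint_pmf map_pmf_comp map_fst_step_pmf)

lemma map_init_traj:
  assumes "0 < H"
  shows "map_pmf (\<lambda>\<tau>. fst (\<tau> ! 0)) (traj M \<pi> H) = init M"
proof -
  have "map_pmf fst (occ_pmf M \<pi> H 1) = init M"
    unfolding occ_pmf_1[OF assms] by (simp add: map_bind_pmf map_pmf_comp bind_return_pmf')
  then show ?thesis by (simp add: occ_pmf_def map_pmf_comp)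
qed

lemma Psi_eq_cov_ratio:
  "Psi M Pol H h \<epsilon> p = Sup (insert 0 ((\<lambda>\<pi>. cov_ratio (occ_pmf M \<pi> H h) (occ_mix_pmf M p H h) \<epsilon>) ` Pol))"
  unfolding Psi_def cov_ratio_def occ_eq_pmf occ_mix_eq_pmf occ_pmf_def by simp

lemma cov_ratio_le_Psi:
  assumes "0 < \<epsilon>" "\<pi> \<in> Pol"
  shows "cov_ratio (occ_pmf M \<pi> H h) (occ_mix_pmf M p H h) \<epsilon> \<le> Psi M Pol H h \<epsilon> p"
  unfolding Psi_eq_cov_ratio using assms cov_ratio_le_inverse
  by (intro cSup_upper bdd_aboveI[where M="1 / \<epsilon>"]) auto

lemma Psi_le:
  assumes "\<And>\<pi>. \<pi> \<in> Pol \<Longrightarrow> cov_ratio (occ_pmf M \<pi> H h) (occ_mix_pmf M p H h) \<epsilon> \<le> B" "0 \<le> B"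
  shows "Psi M Pol H h \<epsilon> p \<le> B"
  unfolding Psi_eq_cov_ratio using assms by (intro cSup_least) auto

(* For the estimate and the true model and p = q^(t), this is the t-th summand of est_err. *)
definition mix_hell2 :: "('x, 'a) mdp \<Rightarrow> ('x, 'a) mdp \<Rightarrow> nat \<Rightarrow> ('x, 'a) policy pmf \<Rightarrow> real" where
  "mix_hell2 M1 M2 H p = expect p (\<lambda>\<pi>. hell2 (traj M1 \<pi> H) (traj M2 \<pi> H))"

lemma mix_hell2_nonneg: "0 \<le> mix_hell2 M1 M2 H p"
  unfolding mix_hell2_def by (simp add: integral_nonneg_AE hell2_nonneg)

lemma hell2_occ_mix_pmf_le: "hell2 (occ_mix_pmf M1 p H h) (occ_mix_pmf M2 p H h) \<le> mix_hell2 M1 M2 H p"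
  unfolding occ_mix_pmf_def mix_hell2_def
  by (rule order_trans[OF hell2_bind_pmf_le expect_hell2_mono])
     (simp add: occ_pmf_def hell2_map_pmf_le)

lemma expect_hell2_trans_le:
  assumes "1 \<le> h" "h < H"
  shows "expect (occ_mix_pmf M1 p H h) (\<lambda>z. hell2 (trans M1 h (fst z) (snd z)) (trans M2 h (fst z) (snd z)))
       \<le> 4 * mix_hell2 M1 M2 H p"
proof -
  let ?J = "\<lambda>M. joint_pmf (occ_mix_pmf M p H h) (\<lambda>z. trans M h (fst z) (snd z))"
  have J: "?J M = bind_pmf p (\<lambda>\<pi>. map_pmf (\<lambda>\<tau>. (\<tau> ! (h - 1), fst (\<tau> ! h))) (traj M \<pi> H))" for M
    by (simp add: occ_mix_pmf_def joint_pmf_bind_pmf joint_occ_pmf_trans[OF assms, symmetric])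
  have "hell2 (?J M1) (?J M2) \<le> mix_hell2 M1 M2 H p"
    unfolding J mix_hell2_def by (rule order_trans[OF hell2_bind_pmf_le expect_hell2_mono]) (rule hell2_map_pmf_le)
  then show ?thesis
    using expect_hell2_le_joint_pmf[where \<mu>="occ_mix_pmf M1 p H h" and \<nu>="occ_mix_pmf M2 p H h"
        and K="\<lambda>z. trans M1 h (fst z) (snd z)" and L="\<lambda>z. trans M2 h (fst z) (snd z)"]
      hell2_occ_mix_pmf_le[of M1 p H h M2] by fastforce
qed

lemma hell2_init_le_mix_hell2: "0 < H \<Longrightarrow> hell2 (init M1) (init M2) \<le> mix_hell2 M1 M2 H p"
  unfolding mix_hell2_def
  using hell2_map_pmf_le[of "\<lambda>\<tau>. fst (\<tau> ! 0)" "traj M1 _ H" "traj M2 _ H"] hell2_le_2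
  by (intro measure_pmf.integral_ge_const integrable_pmf_bounded[where B=2])
     (auto simp: map_init_traj abs_le_iff hell2_nonneg)

lemma mix_hell2_le_uniform:
  "h \<in> {1..H} \<Longrightarrow> mix_hell2 M1 M2 H (p h) \<le> H * mix_hell2 M1 M2 H (bind_pmf (pmf_of_set {1..H}) p)"
  unfolding mix_hell2_def
  using expect_le_card_mul_uniform[where I="{1..H}" and i=h and B=2 and p=p
      and f="\<lambda>\<pi>. hell2 (traj M1 \<pi> H) (traj M2 \<pi> H)"]
  by (simp add: hell2_nonneg hell2_le_2)

lemma est_err_nonneg: "0 \<le> est_err orc lrn Ms H T hs"
  unfolding est_err_def by (intro sum_nonneg integral_nonneg_AE AE_I2 hell2_nonneg)

section \<open>Simulation lemma\<close>

definition trans_err :: "('x, 'a) mdp \<Rightarrow> ('x, 'a) mdp \<Rightarrow> nat \<Rightarrow> 'x \<times> 'a \<Rightarrow> real" where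
  "trans_err M1 M2 h z = min 1 (sqrt (hell2 (trans M1 h (fst z) (snd z)) (trans M2 h (fst z) (snd z))))"

lemma trans_err_nonneg: "0 \<le> trans_err M1 M2 h z"
  and trans_err_le_1: "trans_err M1 M2 h z \<le> 1"
  by (simp_all add: trans_err_def hell2_nonneg)

lemma trans_err_square_le:
  "(trans_err M1 M2 h z)\<^sup>2 \<le> hell2 (trans M2 h (fst z) (snd z)) (trans M1 h (fst z) (snd z))"
proof -
  have "(trans_err M1 M2 h z)\<^sup>2 \<le> (sqrt (hell2 (trans M1 h (fst z) (snd z)) (trans M2 h (fst z) (snd z))))\<^sup>2"
    by (intro power_mono) (simp_all add: trans_err_def trans_err_nonneg hell2_nonneg)
  then show ?thesis by (simp add: hell2_nonneg hell2_commute)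
qed

lemma expect_step_pmf_le:
  fixes g :: "'x \<times> 'a \<Rightarrow> real"
  assumes "\<And>z. 0 \<le> g z" "\<And>z. g z \<le> 1"
  shows "expect (step_pmf M1 \<pi> h z) g \<le> expect (step_pmf M2 \<pi> h z) g + trans_err M1 M2 h z"
  unfolding step_pmf_def trans_err_def by (rule expect_bind_pmf_le_hell2[OF assms])

lemma expect_occ_pmf_simulation:
  fixes g :: "'x \<times> 'a \<Rightarrow> real"
  assumes "1 \<le> h" "h \<le> H" "\<And>z. 0 \<le> g z" "\<And>z. g z \<le> 1"
  shows "expect (occ_pmf M1 \<pi> H h) g \<le> expect (occ_pmf M2 \<pi> H h) g + min 1 (sqrt (hell2 (init M1) (init M2)))
           + (\<Sum>l\<in>{1..<h}. expect (occ_pmf M2 \<pi> H l) (trans_err M1 M2 l))"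
  using assms
proof (induction h arbitrary: g rule: nat_induct_at_least)
  case base
  then have "0 < H" by simp
  then show ?case unfolding occ_pmf_1[OF \<open>0 < H\<close>] using base by (simp add: expect_bind_pmf_le_hell2)
next
  case (Suc h)
  have h: "1 \<le> h" "h < H" using Suc by simp_all
  define G where "G M z = expect (step_pmf M \<pi> h z) g" for M z
  have G: "0 \<le> G M z" "G M z \<le> 1" for M z
    using Suc.prems by (simp_all add: G_def integral_nonneg_AE expect_le_bound)
  have occ_Suc: "expect (occ_pmf M \<pi> H (Suc h)) g = expect (occ_pmf M \<pi> H h) (G M)" for M
    unfolding occ_pmf_Suc[OF h] G_def using Suc.prems by (intro expect_bind_pmf[where B=1]) auto
  have "expect (occ_pmf M1 \<pi> H h) (G M1) \<le> expect (occ_pmf M2 \<pi> H h) (G M1)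
          + min 1 (sqrt (hell2 (init M1) (init M2))) + (\<Sum>l\<in>{1..<h}. expect (occ_pmf M2 \<pi> H l) (trans_err M1 M2 l))"
    using Suc.IH G h by simp
  also have "expect (occ_pmf M2 \<pi> H h) (G M1) \<le> expect (occ_pmf M2 \<pi> H h) (\<lambda>z. G M2 z + trans_err M1 M2 h z)"
  proof (rule integral_mono)
    have "\<bar>G M2 z + trans_err M1 M2 h z\<bar> \<le> 2" for z
      using G[of M2 z] trans_err_nonneg[of M1 M2 h z] trans_err_le_1[of M1 M2 h z] by simp
    then show "integrable (occ_pmf M2 \<pi> H h) (\<lambda>z. G M2 z + trans_err M1 M2 h z)"
      by (rule integrable_pmf_bounded)
    show "integrable (occ_pmf M2 \<pi> H h) (G M1)" using G by (intro integrable_pmf_bounded[where B=1]) simp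
    show "G M1 z \<le> G M2 z + trans_err M1 M2 h z" for z
      unfolding G_def by (rule expect_step_pmf_le) (use Suc.prems in auto)
  qed
  also have "\<dots> = expect (occ_pmf M2 \<pi> H h) (G M2) + expect (occ_pmf M2 \<pi> H h) (trans_err M1 M2 h)"
    by (intro Bochner_Integration.integral_add integrable_pmf_bounded[where B=1])
       (simp_all add: G abs_of_nonneg[OF G(1)] abs_of_nonneg[OF trans_err_nonneg] trans_err_le_1)
  finally show ?case
    using h by (simp add: occ_Suc)
qed

section \<open>Coverage of the output\<close>

lemma expect_trans_err_le:
  assumes l: "1 \<le> l" "l < H" and \<epsilon>: "0 < \<epsilon>" and C: "0 < C"
    and cov: "cov_ratio (occ_pmf Mh \<pi> H l) (occ_mix_pmf Mh p H l) \<epsilon> \<le> C"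
  shows "expect (occ_pmf Mh \<pi> H l) (trans_err Ms Mh l) \<le> 4 * sqrt (C * mix_hell2 Mh Ms H p) + 2 * \<epsilon> * C"
proof -
  have "expect (occ_mix_pmf Mh p H l) (\<lambda>z. (trans_err Ms Mh l z)\<^sup>2)
      \<le> expect (occ_mix_pmf Mh p H l) (\<lambda>z. hell2 (trans Mh l (fst z) (snd z)) (trans Ms l (fst z) (snd z)))"
    by (intro integral_mono integrable_pmf_bounded[where B=2] abs_hell2_le_2 trans_err_square_le)
       (simp add: trans_err_nonneg trans_err_le_1 power_le_one order_trans[OF _ one_le_numeral])
  also have "\<dots> \<le> 4 * mix_hell2 Mh Ms H p" by (rule expect_hell2_trans_le[OF l])
  finally have "sqrt (C * expect (occ_mix_pmf Mh p H l) (\<lambda>z. (trans_err Ms Mh l z)\<^sup>2))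
      \<le> sqrt (C * (4 * mix_hell2 Mh Ms H p))"
    using C by (intro real_sqrt_le_mono mult_left_mono) auto
  also have "\<dots> = 2 * sqrt (C * mix_hell2 Mh Ms H p)"
    by (simp add: real_sqrt_mult ac_simps)
  finally show ?thesis
    using expect_le_cov_ratio[where s="trans_err Ms Mh l", OF trans_err_nonneg trans_err_le_1 \<epsilon> C cov]
    by linarith
qed

lemma expect_occ_pmf_le_estimated:
  fixes Ms Mh :: "('x, 'a) mdp" and p :: "nat \<Rightarrow> ('x, 'a) policy pmf" and g :: "'x \<times> 'a \<Rightarrow> real"
  assumes h: "h \<in> {1..H}" and \<epsilon>: "0 < \<epsilon>" and C: "1 \<le> C"
    and cov: "\<And>l. l \<in> {1..H} \<Longrightarrow> cov_ratio (occ_pmf Mh \<pi> H l) (occ_mix_pmf Mh (p l) H l) \<epsilon> \<le> C"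
    and g: "\<And>z. 0 \<le> g z" "\<And>z. g z \<le> 1"
  defines "D \<equiv> mix_hell2 Mh Ms H (bind_pmf (pmf_of_set {1..H}) p)"
  shows "expect (occ_pmf Ms \<pi> H h) g \<le> expect (occ_pmf Mh \<pi> H h) g + h * (4 * sqrt (C * H * D) + 2 * \<epsilon> * C)"
proof -
  define s where "s = sqrt (C * H * D)"
  have H: "0 < H" using h by simp
  have D: "0 \<le> D" by (simp add: D_def mix_hell2_nonneg)
  have "hell2 (init Ms) (init Mh) \<le> 1 * D"
    using hell2_init_le_mix_hell2[OF H] by (simp add: D_def hell2_commute)
  also have "\<dots> \<le> C * H * D" using C H D mult_mono[of 1 C 1 "real H"] by (intro mult_right_mono) simp_all
  finally have init: "min 1 (sqrt (hell2 (init Ms) (init Mh))) \<le> s"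
    unfolding s_def by (simp add: min.coboundedI2)
  have err: "expect (occ_pmf Mh \<pi> H l) (trans_err Ms Mh l) \<le> 4 * s + 2 * \<epsilon> * C" if l: "l \<in> {1..<h}" for l
  proof -
    have "mix_hell2 Mh Ms H (p l) \<le> H * D"
      using mix_hell2_le_uniform[of l H Mh Ms p] l h by (simp add: D_def)
    then have "sqrt (C * mix_hell2 Mh Ms H (p l)) \<le> s"
      unfolding s_def using C by (auto intro!: real_sqrt_le_mono mult_left_mono simp: mult.assoc)
    moreover have "expect (occ_pmf Mh \<pi> H l) (trans_err Ms Mh l) \<le> 4 * sqrt (C * mix_hell2 Mh Ms H (p l)) + 2 * \<epsilon> * C"
      by (rule expect_trans_err_le[OF _ _ \<epsilon> _ cov]) (use l h C in auto)
    ultimately show ?thesis by linarith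
  qed
  have "expect (occ_pmf Ms \<pi> H h) g \<le> expect (occ_pmf Mh \<pi> H h) g + min 1 (sqrt (hell2 (init Ms) (init Mh)))
      + (\<Sum>l\<in>{1..<h}. expect (occ_pmf Mh \<pi> H l) (trans_err Ms Mh l))"
    using h g by (intro expect_occ_pmf_simulation) auto
  also have "(\<Sum>l\<in>{1..<h}. expect (occ_pmf Mh \<pi> H l) (trans_err Ms Mh l)) \<le> (h - 1) * (4 * s + 2 * \<epsilon> * C)"
    using sum_bounded_above[of "{1..<h}" _ "4 * s + 2 * \<epsilon> * C", OF err] by simp
  also have "expect (occ_pmf Mh \<pi> H h) g + min 1 (sqrt (hell2 (init Ms) (init Mh))) + (h - 1) * (4 * s + 2 * \<epsilon> * C)
      \<le> expect (occ_pmf Mh \<pi> H h) g + h * (4 * s + 2 * \<epsilon> * C)"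
  proof -
    have "0 \<le> s" "0 \<le> 2 * \<epsilon> * C" using C D \<epsilon> by (simp_all add: s_def)
    then have "min 1 (sqrt (hell2 (init Ms) (init Mh))) \<le> 4 * s + 2 * \<epsilon> * C" using init by linarith
    then show ?thesis using h by (simp add: of_nat_diff algebra_simps)
  qed
  finally show ?thesis unfolding s_def by simp
qed

lemma cov_ratio_true_model_le:
  fixes Ms Mh :: "('x, 'a) mdp" and p :: "nat \<Rightarrow> ('x, 'a) policy pmf"
  assumes h: "h \<in> {1..H}" and \<epsilon>: "0 < \<epsilon>" and C: "1 \<le> C"
    and cov: "\<And>l. l \<in> {1..H} \<Longrightarrow> cov_ratio (occ_pmf Mh \<pi> H l) (occ_mix_pmf Mh (p l) H l) \<epsilon> \<le> C"
  defines "D \<equiv> mix_hell2 Mh Ms H (bind_pmf (pmf_of_set {1..H}) p)"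
  shows "cov_ratio (occ_pmf Ms \<pi> H h) (occ_mix_pmf Ms (p h) H h) \<epsilon>
           \<le> 4 * real H * C + 2 * real H / \<epsilon>\<^sup>2 * D + 4 / \<epsilon> * sqrt (real H ^ 3 * C * D)"
proof -
  let ?A = "occ_pmf Ms \<pi> H h" and ?A' = "occ_pmf Mh \<pi> H h"
  define S where "S = {z. pmf ?A' z < pmf ?A z}"
  have D: "0 \<le> D" by (simp add: D_def mix_hell2_nonneg)
  have "cov_ratio ?A' (occ_mix_pmf Ms (p h) H h) \<epsilon>
      \<le> 2 * cov_ratio ?A' (occ_mix_pmf Mh (p h) H h) \<epsilon> + 2 / \<epsilon>\<^sup>2 * hell2 (occ_mix_pmf Mh (p h) H h) (occ_mix_pmf Ms (p h) H h)"
    by (rule cov_ratio_le_denominator_change[OF \<epsilon>])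
  also have "\<dots> \<le> 2 * C + 2 / \<epsilon>\<^sup>2 * (H * D)"
    using cov[OF h] hell2_occ_mix_pmf_le[of Mh "p h" H h Ms] mix_hell2_le_uniform[OF h, of Mh Ms p] \<epsilon>
    unfolding D_def by (intro add_mono mult_left_mono) auto
  finally have denominator: "cov_ratio ?A' (occ_mix_pmf Ms (p h) H h) \<epsilon> \<le> 2 * C + 2 / \<epsilon>\<^sup>2 * (H * D)" .
  have "measure_pmf.prob ?A S - measure_pmf.prob ?A' S \<le> h * (4 * sqrt (C * H * D) + 2 * \<epsilon> * C)"
    using expect_occ_pmf_le_estimated[where Ms=Ms and g="indicator S", OF h \<epsilon> C cov]
    by (simp add: D_def)
  also have "\<dots> \<le> H * (4 * sqrt (C * H * D) + 2 * \<epsilon> * C)"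
    using h \<epsilon> C D by (intro mult_right_mono) auto
  finally have "(measure_pmf.prob ?A S - measure_pmf.prob ?A' S) / \<epsilon>
      \<le> H * (4 * sqrt (C * H * D) + 2 * \<epsilon> * C) / \<epsilon>"
    by (rule divide_right_mono) (use \<epsilon> in simp)
  also have "\<dots> = 4 * real H * sqrt (C * H * D) / \<epsilon> + 2 * real H * C"
    using \<epsilon> by (simp add: field_simps)
  finally have numerator: "(measure_pmf.prob ?A S - measure_pmf.prob ?A' S) / \<epsilon>
      \<le> 4 * real H * sqrt (C * H * D) / \<epsilon> + 2 * real H * C" .
  have "4 / \<epsilon> * sqrt (real H ^ 3 * C * D) = 4 * real H * sqrt (C * H * D) / \<epsilon>"
    by (simp add: real_sqrt_mult power3_eq_cube ac_simps)
  moreover have "2 / \<epsilon>\<^sup>2 * (H * D) = 2 * real H / \<epsilon>\<^sup>2 * D" by simp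
  moreover have "2 * C \<le> 2 * real H * C" using h C by simp
  ultimately show ?thesis
    using cov_ratio_le_numerator_change[OF \<epsilon>, where A="?A" and A'="?A'" and B="occ_mix_pmf Ms (p h) H h"]
      denominator numerator
    unfolding S_def by linarith
qed

lemma mean_sqrt_le_sqrt_mean:
  fixes x :: "'i \<Rightarrow> real"
  assumes I: "finite I" "I \<noteq> {}" and x: "\<And>i. i \<in> I \<Longrightarrow> 0 \<le> x i"
  shows "(\<Sum>i\<in>I. sqrt (x i)) / card I \<le> sqrt ((\<Sum>i\<in>I. x i) / card I)"
proof -
  have n: "0 < real (card I)" using I by (simp add: card_gt_0_iff)
  have "(\<Sum>i\<in>I. 1 * sqrt (x i))\<^sup>2 \<le> (\<Sum>i\<in>I. 1\<^sup>2) * (\<Sum>i\<in>I. (sqrt (x i))\<^sup>2)"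
    by (rule Cauchy_Schwarz_ineq_sum)
  then have "(\<Sum>i\<in>I. sqrt (x i)) \<le> sqrt (card I * (\<Sum>i\<in>I. x i))"
    using x by (simp add: real_le_rsqrt)
  then have "(\<Sum>i\<in>I. sqrt (x i)) / card I \<le> sqrt (card I * (\<Sum>i\<in>I. x i)) / card I"
    using n by (simp add: divide_right_mono)
  also have "\<dots> = sqrt ((card I * (\<Sum>i\<in>I. x i)) / (card I)\<^sup>2)"
    using n by (simp add: real_sqrt_divide)
  also have "\<dots> = sqrt ((\<Sum>i\<in>I. x i) / card I)"
    using n by (simp add: power2_eq_square)
  finally show ?thesis .
qed

lemma mean_affine_sqrt_le:
  fixes D :: "'i \<Rightarrow> real"
  assumes I: "finite I" "I \<noteq> {}" and D: "\<And>i. 0 \<le> D i" and sum: "(\<Sum>i\<in>I. D i) \<le> E"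
    and b: "0 \<le> b" and c: "0 \<le> c" and k: "0 \<le> k"
  shows "(\<Sum>i\<in>I. a + b * D i + c * sqrt (k * D i)) / card I \<le> a + b * (E / card I) + c * sqrt (k * E / card I)"
proof -
  have n: "0 < real (card I)" using I by (simp add: card_gt_0_iff)
  have mean_D: "(\<Sum>i\<in>I. D i) / card I \<le> E / card I" using sum n by (simp add: divide_right_mono)
  have "(\<Sum>i\<in>I. sqrt (k * D i)) / card I \<le> sqrt ((\<Sum>i\<in>I. k * D i) / card I)"
    using I D k by (intro mean_sqrt_le_sqrt_mean) auto
  also have "\<dots> = sqrt (k * ((\<Sum>i\<in>I. D i) / card I))" by (simp add: sum_distrib_left)
  also have "\<dots> \<le> sqrt (k * (E / card I))" using mean_D k by (intro real_sqrt_le_mono mult_left_mono)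
  finally have mean_sqrt: "(\<Sum>i\<in>I. sqrt (k * D i)) / card I \<le> sqrt (k * E / card I)" by simp
  have "(\<Sum>i\<in>I. a + b * D i + c * sqrt (k * D i)) / card I
      = a + b * ((\<Sum>i\<in>I. D i) / card I) + c * ((\<Sum>i\<in>I. sqrt (k * D i)) / card I)"
    using n by (simp add: sum.distrib sum_distrib_left add_divide_distrib)
  also have "\<dots> \<le> a + b * (E / card I) + c * sqrt (k * E / card I)"
    using mean_D mean_sqrt b c by (intro add_mono mult_left_mono order_refl)
  finally show ?thesis .
qed

lemma Psi_alg_out_le:
  fixes Ms :: "('x, 'a) mdp" and orc :: "('x, 'a) hist \<Rightarrow> ('x, 'a) mdp"
    and cover :: "('x, 'a) hist \<Rightarrow> nat \<Rightarrow> ('x, 'a) policy pmf"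
  assumes T: "0 < T" and C: "1 \<le> C" and \<epsilon>: "0 < \<epsilon>" and h: "h \<in> {1..H}"
    and feasible: "\<And>hs h. length hs < T \<Longrightarrow> h \<in> {1..H} \<Longrightarrow> Psi (orc hs) Pol H h \<epsilon> (cover hs h) \<le> C"
    and est: "est_err orc (alg_lrn cover H) Ms H T hs \<le> Est"
  shows "Psi Ms Pol H h \<epsilon> (alg_out cover T hs h)
           \<le> 4 * real H * C + 2 * real H / \<epsilon>\<^sup>2 * (Est / T) + 4 / \<epsilon> * sqrt (real H ^ 3 * C * Est / T)"
proof -
  define D where "D t = mix_hell2 (orc (take t hs)) Ms H (alg_lrn cover H (take t hs))" for t
  have D: "0 \<le> D t" for t by (simp add: D_def mix_hell2_nonneg)
  have sum_D: "(\<Sum>t\<in>{0..<T}. D t) \<le> Est"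
    using est by (simp add: est_err_def D_def mix_hell2_def atLeast0LessThan)
  have round: "cov_ratio (occ_pmf Ms \<pi> H h) (occ_mix_pmf Ms (cover (take t hs) h) H h) \<epsilon>
      \<le> 4 * real H * C + 2 * real H / \<epsilon>\<^sup>2 * D t + 4 / \<epsilon> * sqrt (real H ^ 3 * C * D t)"
    if \<pi>: "\<pi> \<in> Pol" and t: "t \<in> {0..<T}" for \<pi> t
    unfolding D_def alg_lrn_def
  proof (rule cov_ratio_true_model_le[OF h \<epsilon> C])
    fix l assume "l \<in> {1..H}"
    with t show "cov_ratio (occ_pmf (orc (take t hs)) \<pi> H l)
        (occ_mix_pmf (orc (take t hs)) (cover (take t hs) l) H l) \<epsilon> \<le> C"
      by (intro order_trans[OF cov_ratio_le_Psi[OF \<epsilon> \<pi>] feasible]) auto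
  qed
  have mix: "occ_mix_pmf Ms (alg_out cover T hs h) H h
      = bind_pmf (pmf_of_set {0..<T}) (\<lambda>t. occ_mix_pmf Ms (cover (take t hs) h) H h)"
    by (simp add: alg_out_def occ_mix_pmf_def bind_assoc_pmf)
  show ?thesis
  proof (rule Psi_le)
    fix \<pi> assume \<pi>: "\<pi> \<in> Pol"
    have "cov_ratio (occ_pmf Ms \<pi> H h) (occ_mix_pmf Ms (alg_out cover T hs h) H h) \<epsilon>
        \<le> (\<Sum>t\<in>{0..<T}. cov_ratio (occ_pmf Ms \<pi> H h) (occ_mix_pmf Ms (cover (take t hs) h) H h) \<epsilon>) / T"
      unfolding mix using cov_ratio_uniform_mix_le[of "{0..<T}" \<epsilon>] T \<epsilon> by simp
    also have "\<dots> \<le> (\<Sum>t\<in>{0..<T}. 4 * real H * C + 2 * real H / \<epsilon>\<^sup>2 * D t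
                                      + 4 / \<epsilon> * sqrt (real H ^ 3 * C * D t)) / T"
      using round[OF \<pi>] by (intro divide_right_mono sum_mono) auto
    also have "\<dots> \<le> 4 * real H * C + 2 * real H / \<epsilon>\<^sup>2 * (Est / T) + 4 / \<epsilon> * sqrt (real H ^ 3 * C * Est / T)"
      by (rule mean_affine_sqrt_le[where I="{0..<T}", unfolded card_atLeastLessThan diff_zero])
         (use T D sum_D C \<epsilon> in auto)
    finally show "cov_ratio (occ_pmf Ms \<pi> H h) (occ_mix_pmf Ms (alg_out cover T hs h) H h) \<epsilon>
        \<le> 4 * real H * C + 2 * real H / \<epsilon>\<^sup>2 * (Est / T) + 4 / \<epsilon> * sqrt (real H ^ 3 * C * Est / T)" .
  next
    show "0 \<le> 4 * real H * C + 2 * real H / \<epsilon>\<^sup>2 * (Est / T) + 4 / \<epsilon> * sqrt (real H ^ 3 * C * Est / T)"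
      using C T \<epsilon> order_trans[OF sum_nonneg[OF D] sum_D]
      by (intro add_nonneg_nonneg mult_nonneg_nonneg divide_nonneg_nonneg) auto
  qed
qed

theorem theoremI4:
  fixes \<M> :: "('x::countable, 'a) mdp set"
    and Ms :: "('x, 'a) mdp"
    and Pol :: "('x, 'a) policy set"
    and orc :: "('x, 'a) hist \<Rightarrow> ('x, 'a) mdp"
    and cover :: "('x, 'a) hist \<Rightarrow> nat \<Rightarrow> ('x, 'a) policy pmf"
    and H T :: nat and C \<epsilon> \<delta> :: real
    and Est :: "nat \<Rightarrow> real \<Rightarrow> real"
  assumes H_pos: "0 < H" and T_pos: "0 < T"
    and C_ge: "1 \<le> C" and eps_pos: "0 < \<epsilon>"
    and true_model: "Ms \<in> \<M>"
    and orc_range: "\<And>hs. orc hs \<in> \<M>"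
    and online_est: "\<And>lrn. measure_pmf.prob (run lrn Ms H T)
                   {hs. est_err orc lrn Ms H T hs \<le> Est T \<delta>} \<ge> 1 - \<delta>"
    and cover_in_Pi: "\<And>hs h. length hs < T \<Longrightarrow> h \<in> {1..H} \<Longrightarrow> set_pmf (cover hs h) \<subseteq> Pol"
    and cover_feasible: "\<And>hs h. length hs < T \<Longrightarrow> h \<in> {1..H} \<Longrightarrow>
                           Psi (orc hs) Pol H h \<epsilon> (cover hs h) \<le> C"
  shows "measure_pmf.prob (run (alg_lrn cover H) Ms H T)
           {hs. \<forall>h\<in>{1..H}. Psi Ms Pol H h \<epsilon> (alg_out cover T hs h)
                 \<le> 11 * H * C + 12 / \<epsilon> * sqrt (H ^ 3 * C * Est T \<delta> / T)
                    + 8 * H / \<epsilon> ^ 2 * (Est T \<delta> / T)} \<ge> 1 - \<delta>"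
proof -
  have bound: "Psi Ms Pol H h \<epsilon> (alg_out cover T hs h)
      \<le> 11 * H * C + 12 / \<epsilon> * sqrt (H ^ 3 * C * Est T \<delta> / T) + 8 * H / \<epsilon> ^ 2 * (Est T \<delta> / T)"
    if hs: "est_err orc (alg_lrn cover H) Ms H T hs \<le> Est T \<delta>" and h: "h \<in> {1..H}" for hs h
  proof -
    have Est: "0 \<le> Est T \<delta>" using order_trans[OF est_err_nonneg hs] .
    have "4 / \<epsilon> * sqrt (real H ^ 3 * C * Est T \<delta> / T) \<le> 12 / \<epsilon> * sqrt (real H ^ 3 * C * Est T \<delta> / T)"
      and "2 * real H / \<epsilon>\<^sup>2 * (Est T \<delta> / T) \<le> 8 * real H / \<epsilon>\<^sup>2 * (Est T \<delta> / T)"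
      using Est C_ge eps_pos by (intro mult_right_mono divide_right_mono; simp)+
    moreover have "4 * real H * C \<le> 11 * real H * C" using C_ge by simp
    ultimately show ?thesis
      using Psi_alg_out_le[OF T_pos C_ge eps_pos h cover_feasible hs]
      unfolding of_nat_mult of_nat_power of_nat_numeral by linarith
  qed
  show ?thesis
    using bound by (intro order_trans[OF online_est measure_pmf.finite_measure_mono]) (blast | simp)+
qed

end
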